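(* For $i=0,1$ let $\mathcal L_i$ be a cabled linkage in $\mathbb R^n$ which is (strongly) functional for $f_i\colon(\mathbb R^n)^{k_i}\to(\mathbb R^n)^{m_i}$ with restricted domain $U_i$. Let $\mathcal L$ be the disjoint union of $\mathcal L_0$ and $\mathcal L_1$ (with input and output vertices those of $\mathcal L_0$ followed by those of $\mathcal L_1$). Then: (1) $\mathcal L$ is (strongly) functional for $f_0\times f_1\colon(\mathbb R^n)^{k_0}\times(\mathbb R^n)^{k_1}\to(\mathbb R^n)^{m_0}\times(\mathbb R^n)^{m_1}$ with restricted domain $U_0\times U_1$; (2) if $k_0=k_1$, and $\mathcal L'$ is obtained from $\mathcal L$ by identifying the $j$-th input vertex of $\mathcal L_0$ with the $j$-th input vertex of $\mathcal L_1$ for each $j$, then $\mathcal L'$ is (strongly) functional for $(f_0,f_1)\colon(\mathbb R^n)^{k_0}\to(\mathbb R^n)^{m_0}\times(\mathbb R^n)^{m_1}$ with restricted domain $U_0\cap U_1$.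
   Context: A cabled linkage in $\mathbb R^n$ is $\mathcal L=(L,\ell,V,\mu,F)$: $L$ a finite one-dimensional simplicial complex (vertex set $\mathcal V(L)$, edge set $\mathcal E(L)$), $\ell\colon\mathcal E(L)\to(0,\infty)$, $V\subset\mathcal V(L)$ fixed vertices, $\mu\colon V\to\mathbb R^n$, $F\subset\mathcal E(L)$ flexible edges. $\mathcal C(\mathcal L)=\{\varphi\colon\mathcal V(L)\to\mathbb R^n\mid\varphi(v)=\mu(v)\ (v\in V),\ |\varphi(v)-\varphi(w)|\le\ell(vw)\ (vw\in F),\ |\varphi(v)-\varphi(w)|=\ell(vw)\ (vw\in\mathcal E(L)\setminus F)\}$. $\mathcal L$ is quasifunctional for $f\colon(\mathbb R^n)^k\to(\mathbb R^n)^m$ if there are vertices $w_1,\dots,w_k$ (input) and $v_1,\dots,v_m$ (output), repetitions allowed, with input map $q(\varphi)=(\varphi(w_1),\dots,\varphi(w_k))$, output map $p(\varphi)=(\varphi(v_1),\dots,\varphi(v_m))$ and $p=f\circ q$; its domain is $q(\mathcal C(\mathcal L))$. It is functional with restricted domain $U\subset q(\mathcal C(\mathcal L))$ if there are a finite set $E$ and an analytic isomorphism $\sigma\colon U\times E\to q^{-1}(U)$ with $q(\sigma(u,c))=u$; strongly functional if $q\colon\mathcal C(\mathcal L)\to q(\mathcal C(\mathcal L))$ is an analytic isomorphism, and strongly functional with restricted domain $U$ if also $U\subset q(\mathcal C(\mathcal L))$. An analytic isomorphism is a homeomorphism $h$ with $h,h^{-1}$ restrictions of analytic maps. *)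

theory Defs
  imports "HOL-Analysis.Analysis"
begin

text \<open>A map G between Euclidean spaces is real analytic on W if around every point
  x0 of W it is given by an (unconditionally, hence absolutely) convergent
  multivariate power series in the coordinates of x - x0.\<close>
definition real_analytic_on :: "('a::euclidean_space \<Rightarrow> 'b::euclidean_space) \<Rightarrow> 'a set \<Rightarrow> bool" where
  "real_analytic_on G W \<longleftrightarrow>
     (\<forall>x0\<in>W. \<exists>r>0. ball x0 r \<subseteq> W \<and> (\<exists>c :: ('a \<Rightarrow> nat) \<Rightarrow> 'b. \<forall>x\<in>ball x0 r.
        ((\<lambda>\<alpha>. (\<Prod>b\<in>Basis. ((x - x0) \<bullet> b) ^ \<alpha> b) *\<^sub>R c \<alpha>) has_sum G x)
          {\<alpha>. \<forall>b. b \<notin> Basis \<longrightarrow> \<alpha> b = 0}))"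

definition analytic_map_on :: "('a::euclidean_space \<Rightarrow> 'b::euclidean_space) \<Rightarrow> 'a set \<Rightarrow> bool" where
  "analytic_map_on h S \<longleftrightarrow>
     (\<forall>x\<in>S. \<exists>W G. open W \<and> x \<in> W \<and> real_analytic_on G W \<and> (\<forall>y\<in>S \<inter> W. G y = h y))"

definition analytic_iso :: "'a::euclidean_space set \<Rightarrow> 'b::euclidean_space set \<Rightarrow> ('a \<Rightarrow> 'b) \<Rightarrow> bool" where
  "analytic_iso S T h \<longleftrightarrow>
     (\<exists>g. homeomorphism S T h g \<and> analytic_map_on h S \<and> analytic_map_on g T)"

text \<open>Vertices are a subset of a finite type 'a; edges are indexed by a set of labels
  of type 'e, each with its ordered pair of endpoints; pins = graph of \<mu> on the
  set V of fixed vertices.\<close>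
record ('a, 'e, 'p) linkage =
  verts :: "'a set"
  edges :: "'e set"
  ends  :: "'e \<Rightarrow> 'a \<times> 'a"
  len   :: "'e \<Rightarrow> real"
  flex  :: "'e set"
  pins  :: "('a \<times> 'p) set"

definition cabled_linkage :: "('a, 'e, 'p) linkage \<Rightarrow> bool" where
  "cabled_linkage L \<longleftrightarrow>
     finite (verts L) \<and> finite (edges L) \<and>
     (\<forall>e\<in>edges L. fst (ends L e) \<in> verts L \<and> snd (ends L e) \<in> verts L \<and>
                  fst (ends L e) \<noteq> snd (ends L e) \<and> len L e > 0) \<and>
     (\<forall>e\<in>edges L. \<forall>e'\<in>edges L.
        {fst (ends L e), snd (ends L e)} = {fst (ends L e'), snd (ends L e')} \<longrightarrow> e = e') \<and>
     flex L \<subseteq> edges L \<and> fst ` pins L \<subseteq> verts L \<and>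
     (\<forall>v x y. (v, x) \<in> pins L \<longrightarrow> (v, y) \<in> pins L \<longrightarrow> x = y)"

text \<open>Configuration space; a configuration is a map from the vertex set to R^n,
  encoded as a vector indexed by the finite vertex type, equal to 0 off the vertex set.\<close>
definition conf :: "('a::finite, 'e, real^'n) linkage \<Rightarrow> ((real^'n)^'a) set" where
  "conf L = {\<phi>. (\<forall>v. v \<notin> verts L \<longrightarrow> \<phi> $ v = 0) \<and>
                (\<forall>(v, x)\<in>pins L. \<phi> $ v = x) \<and>
                (\<forall>e\<in>flex L. dist (\<phi> $ fst (ends L e)) (\<phi> $ snd (ends L e)) \<le> len L e) \<and>
                (\<forall>e\<in>edges L - flex L. dist (\<phi> $ fst (ends L e)) (\<phi> $ snd (ends L e)) = len L e)}"

definition evmap :: "('k \<Rightarrow> 'a) \<Rightarrow> (real^'n)^'a \<Rightarrow> (real^'n)^'k" where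
  "evmap ws \<phi> = (\<chi> j. \<phi> $ ws j)"

definition quasifunctional ::
  "('a::finite, 'e, real^'n) linkage \<Rightarrow> ('k::finite \<Rightarrow> 'a) \<Rightarrow> ('m::finite \<Rightarrow> 'a)
     \<Rightarrow> ((real^'n)^'k \<Rightarrow> (real^'n)^'m) \<Rightarrow> bool" where
  "quasifunctional L ws vs f \<longleftrightarrow>
     range ws \<subseteq> verts L \<and> range vs \<subseteq> verts L \<and>
     (\<forall>\<phi>\<in>conf L. evmap vs \<phi> = f (evmap ws \<phi>))"

definition functional_rd ::
  "('a::finite, 'e, real^'n) linkage \<Rightarrow> ('k::finite \<Rightarrow> 'a) \<Rightarrow> ('m::finite \<Rightarrow> 'a)
     \<Rightarrow> ((real^'n)^'k \<Rightarrow> (real^'n)^'m) \<Rightarrow> ((real^'n)^'k) set \<Rightarrow> bool" where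
  "functional_rd L ws vs f U \<longleftrightarrow>
     quasifunctional L ws vs f \<and> U \<subseteq> evmap ws ` conf L \<and>
     (\<exists>(E :: real set) \<sigma>. finite E \<and>
        analytic_iso (U \<times> E) {\<phi>\<in>conf L. evmap ws \<phi> \<in> U} \<sigma> \<and>
        (\<forall>u\<in>U. \<forall>c\<in>E. evmap ws (\<sigma> (u, c)) = u))"

definition strongly_functional_rd ::
  "('a::finite, 'e, real^'n) linkage \<Rightarrow> ('k::finite \<Rightarrow> 'a) \<Rightarrow> ('m::finite \<Rightarrow> 'a)
     \<Rightarrow> ((real^'n)^'k \<Rightarrow> (real^'n)^'m) \<Rightarrow> ((real^'n)^'k) set \<Rightarrow> bool" where
  "strongly_functional_rd L ws vs f U \<longleftrightarrow>
     quasifunctional L ws vs f \<and>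
     analytic_iso (conf L) (evmap ws ` conf L) (evmap ws) \<and>
     U \<subseteq> evmap ws ` conf L"

definition disj_union :: "('a, 'e, 'p) linkage \<Rightarrow> ('b, 'f, 'p) linkage \<Rightarrow> ('a + 'b, 'e + 'f, 'p) linkage" where
  "disj_union L0 L1 = \<lparr> verts = Inl ` verts L0 \<union> Inr ` verts L1,
     edges = Inl ` edges L0 \<union> Inr ` edges L1,
     ends = case_sum (\<lambda>e. map_prod Inl Inl (ends L0 e)) (\<lambda>e. map_prod Inr Inr (ends L1 e)),
     len = case_sum (len L0) (len L1),
     flex = Inl ` flex L0 \<union> Inr ` flex L1,
     pins = map_prod Inl id ` pins L0 \<union> map_prod Inr id ` pins L1 \<rparr>"

definition push_linkage :: "('a \<Rightarrow> 'c) \<Rightarrow> ('a, 'e, 'p) linkage \<Rightarrow> ('c, 'e, 'p) linkage" where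
  "push_linkage \<pi> L = \<lparr> verts = \<pi> ` verts L, edges = edges L,
     ends = (\<lambda>e. map_prod \<pi> \<pi> (ends L e)), len = len L, flex = flex L,
     pins = map_prod \<pi> id ` pins L \<rparr>"

definition is_identification :: "('a \<Rightarrow> 'c) \<Rightarrow> 'a set \<Rightarrow> ('a \<times> 'a) set \<Rightarrow> bool" where
  "is_identification \<pi> D R \<longleftrightarrow> (\<forall>x\<in>D. \<forall>y\<in>D. \<pi> x = \<pi> y \<longleftrightarrow> (x, y) \<in> (R \<union> R\<inverse>)\<^sup>*)"

definition vjoin :: "'p^'k::finite \<Rightarrow> 'p^'l::finite \<Rightarrow> 'p^('k + 'l)" where
  "vjoin x y = (\<chi> i. case i of Inl j \<Rightarrow> x $ j | Inr j \<Rightarrow> y $ j)"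

definition vleft :: "'p^('k::finite + 'l::finite) \<Rightarrow> 'p^'k" where
  "vleft z = (\<chi> j. z $ Inl j)"

definition vright :: "'p^('k::finite + 'l::finite) \<Rightarrow> 'p^'l" where
  "vright z = (\<chi> j. z $ Inr j)"

end

theory Submission
  imports Defs
begin

(* Configurations of the disjoint union are pairs of configurations of the two parts, and
   configurations of the glued linkage are the pairs whose inputs agree.  Both descriptions are
   linear: a configuration is the sum of the embedded parts, and the inputs of the parts are
   obtained from the input by selecting coordinates (its two halves, resp. the input itself).
   Hence the inverse of the input map, resp. the parametrisation of the configurations over U by
   U \<times> E, is assembled from those of the parts, with fibre E0 \<times> E1.  Analyticity survives
   because composing a power series with a coordinate selection only relabels its monomials, and
   because finite fibres are discrete, so that all maps involved are locally such compositions. *)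

section \<open>Real-analytic maps\<close>

definition basis_monomial :: "'a::euclidean_space \<Rightarrow> ('a \<Rightarrow> nat) \<Rightarrow> real" where
  "basis_monomial x \<alpha> = (\<Prod>b\<in>Basis. (x \<bullet> b) ^ \<alpha> b)"

definition multi_indices :: "('a::euclidean_space \<Rightarrow> nat) set" where
  "multi_indices = {\<alpha>. \<forall>b. b \<notin> Basis \<longrightarrow> \<alpha> b = 0}"

lemma real_analytic_on_iff:
  "real_analytic_on G W \<longleftrightarrow>
     (\<forall>x0\<in>W. \<exists>r>0. ball x0 r \<subseteq> W \<and> (\<exists>c. \<forall>x\<in>ball x0 r.
        ((\<lambda>\<alpha>. basis_monomial (x - x0) \<alpha> *\<^sub>R c \<alpha>) has_sum G x) multi_indices))"
  unfolding real_analytic_on_def basis_monomial_def multi_indices_def by simp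

lemma real_analytic_on_imp_open: "real_analytic_on G W \<Longrightarrow> open W"
  unfolding real_analytic_on_iff open_contains_ball by blast

lemma real_analytic_on_subset:
  assumes "real_analytic_on G W" "open W'" "W' \<subseteq> W"
  shows "real_analytic_on G W'"
  unfolding real_analytic_on_iff
proof
  fix x0 assume x0: "x0 \<in> W'"
  then obtain r c where r: "r > 0"
    "\<forall>x\<in>ball x0 r. ((\<lambda>\<alpha>. basis_monomial (x - x0) \<alpha> *\<^sub>R c \<alpha>) has_sum G x) multi_indices"
    using assms unfolding real_analytic_on_iff by blast
  obtain r' where "r' > 0" "ball x0 r' \<subseteq> W'"
    using assms(2) x0 open_contains_ball by blast
  with r show "\<exists>r>0. ball x0 r \<subseteq> W' \<and> (\<exists>c. \<forall>x\<in>ball x0 r.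
      ((\<lambda>\<alpha>. basis_monomial (x - x0) \<alpha> *\<^sub>R c \<alpha>) has_sum G x) multi_indices)"
    by (intro exI[of _ "min r r'"] conjI exI[of _ c]) auto
qed

lemma real_analytic_on_add:
  assumes "real_analytic_on F W" "real_analytic_on G W"
  shows "real_analytic_on (\<lambda>x. F x + G x) W"
  unfolding real_analytic_on_iff
proof
  fix x0 assume x0: "x0 \<in> W"
  obtain r c where r: "r > 0" "ball x0 r \<subseteq> W"
    "\<forall>x\<in>ball x0 r. ((\<lambda>\<alpha>. basis_monomial (x - x0) \<alpha> *\<^sub>R c \<alpha>) has_sum F x) multi_indices"
    using assms x0 unfolding real_analytic_on_iff by blast
  obtain r' d where r': "r' > 0"
    "\<forall>x\<in>ball x0 r'. ((\<lambda>\<alpha>. basis_monomial (x - x0) \<alpha> *\<^sub>R d \<alpha>) has_sum G x) multi_indices"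
    using assms x0 unfolding real_analytic_on_iff by blast
  show "\<exists>r>0. ball x0 r \<subseteq> W \<and> (\<exists>c. \<forall>x\<in>ball x0 r.
      ((\<lambda>\<alpha>. basis_monomial (x - x0) \<alpha> *\<^sub>R c \<alpha>) has_sum F x + G x) multi_indices)"
  proof (intro exI[of _ "min r r'"] conjI exI[of _ "\<lambda>\<alpha>. c \<alpha> + d \<alpha>"] ballI)
    fix x assume "x \<in> ball x0 (min r r')"
    then have "((\<lambda>\<alpha>. basis_monomial (x - x0) \<alpha> *\<^sub>R c \<alpha> + basis_monomial (x - x0) \<alpha> *\<^sub>R d \<alpha>)
        has_sum F x + G x) multi_indices"
      using r r' by (intro has_sum_add) auto
    then show "((\<lambda>\<alpha>. basis_monomial (x - x0) \<alpha> *\<^sub>R (c \<alpha> + d \<alpha>)) has_sum F x + G x) multi_indices"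
      by (simp add: scaleR_add_right)
  qed (use r r' in auto)
qed

lemma real_analytic_on_linear_compose:
  assumes "real_analytic_on G W" "linear L"
  shows "real_analytic_on (\<lambda>x. L (G x)) W"
  unfolding real_analytic_on_iff
proof
  fix x0 assume x0: "x0 \<in> W"
  obtain r c where r: "r > 0" "ball x0 r \<subseteq> W"
    "\<forall>x\<in>ball x0 r. ((\<lambda>\<alpha>. basis_monomial (x - x0) \<alpha> *\<^sub>R c \<alpha>) has_sum G x) multi_indices"
    using assms x0 unfolding real_analytic_on_iff by blast
  show "\<exists>r>0. ball x0 r \<subseteq> W \<and> (\<exists>c. \<forall>x\<in>ball x0 r.
      ((\<lambda>\<alpha>. basis_monomial (x - x0) \<alpha> *\<^sub>R c \<alpha>) has_sum L (G x)) multi_indices)"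
  proof (intro exI[of _ r] conjI exI[of _ "\<lambda>\<alpha>. L (c \<alpha>)"] ballI)
    fix x assume "x \<in> ball x0 r"
    then have "((\<lambda>\<alpha>. L (basis_monomial (x - x0) \<alpha> *\<^sub>R c \<alpha>)) has_sum L (G x)) multi_indices"
      using r assms(2) by (intro has_sum_bounded_linear[of L]) (auto simp: linear_conv_bounded_linear)
    then show "((\<lambda>\<alpha>. basis_monomial (x - x0) \<alpha> *\<^sub>R L (c \<alpha>)) has_sum L (G x)) multi_indices"
      using assms(2) by (simp add: linear_scale)
  qed (use r in auto)
qed

definition unit_multi_index :: "'a \<Rightarrow> 'a \<Rightarrow> nat" where
  "unit_multi_index b = (\<lambda>b'. if b' = b then 1 else 0)"

lemma unit_multi_index_inj: "inj unit_multi_index"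
  unfolding unit_multi_index_def inj_def by (metis zero_neq_one)

lemma unit_multi_index_nonzero: "unit_multi_index b \<noteq> (\<lambda>_. 0)"
  unfolding unit_multi_index_def by (metis zero_neq_one)

lemma basis_monomial_zero [simp]: "basis_monomial y (\<lambda>_. 0) = 1"
  by (simp add: basis_monomial_def)

lemma basis_monomial_unit:
  assumes "b \<in> Basis"
  shows "basis_monomial y (unit_multi_index b) = y \<bullet> b"
proof -
  have "basis_monomial y (unit_multi_index b) = (\<Prod>b'\<in>Basis. if b' = b then y \<bullet> b' else 1)"
    unfolding basis_monomial_def unit_multi_index_def by (intro prod.cong) auto
  also have "\<dots> = y \<bullet> b" using assms by simp
  finally show ?thesis .
qed

lemma real_analytic_on_affine:
  fixes L :: "'a::euclidean_space \<Rightarrow> 'b::euclidean_space"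
  assumes "open W" "linear L"
  shows "real_analytic_on (\<lambda>x. L x + k) W"
  unfolding real_analytic_on_iff
proof
  fix x0 assume x0: "x0 \<in> W"
  obtain r where r: "r > 0" "ball x0 r \<subseteq> W" using assms(1) x0 open_contains_ball by blast
  define B where "B = insert (\<lambda>_. 0) (unit_multi_index ` (Basis :: 'a set))"
  define c where "c \<alpha> = (if \<alpha> = (\<lambda>_. 0) then L x0 + k else 0) +
      (\<Sum>b\<in>Basis. if unit_multi_index b = \<alpha> then L b else 0)" for \<alpha>
  have c_zero: "c (\<lambda>_. 0) = L x0 + k"
    unfolding c_def by (simp add: unit_multi_index_nonzero)
  have c_unit: "c (unit_multi_index b) = L b" if "b \<in> Basis" for b
    unfolding c_def using that
    by (simp add: unit_multi_index_nonzero inj_eq[OF unit_multi_index_inj])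
  have c_other: "c \<alpha> = 0" if "\<alpha> \<notin> B" for \<alpha>
    using that unfolding c_def B_def by (auto intro!: sum.neutral)
  show "\<exists>r>0. ball x0 r \<subseteq> W \<and> (\<exists>c. \<forall>x\<in>ball x0 r.
      ((\<lambda>\<alpha>. basis_monomial (x - x0) \<alpha> *\<^sub>R c \<alpha>) has_sum L x + k) multi_indices)"
  proof (intro exI[of _ r] conjI exI[of _ c] ballI)
    fix x
    show "((\<lambda>\<alpha>. basis_monomial (x - x0) \<alpha> *\<^sub>R c \<alpha>) has_sum L x + k) multi_indices"
    proof (rule has_sum_finite_neutralI[where B = B])
      show "finite B" "B \<subseteq> multi_indices"
        unfolding B_def multi_indices_def unit_multi_index_def by auto
      show "basis_monomial (x - x0) \<alpha> *\<^sub>R c \<alpha> = 0" if "\<alpha> \<in> multi_indices - B" for \<alpha>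
        using that c_other by simp
      have "(\<Sum>\<alpha>\<in>B. basis_monomial (x - x0) \<alpha> *\<^sub>R c \<alpha>) =
          L x0 + k + (\<Sum>\<alpha>\<in>unit_multi_index ` Basis. basis_monomial (x - x0) \<alpha> *\<^sub>R c \<alpha>)"
        unfolding B_def using c_zero by (subst sum.insert) (auto simp: unit_multi_index_nonzero[THEN not_sym])
      also have "\<dots> = L x0 + k + (\<Sum>b\<in>Basis. ((x - x0) \<bullet> b) *\<^sub>R L b)"
        by (subst sum.reindex)
          (auto intro!: sum.cong inj_on_subset[OF unit_multi_index_inj] simp: basis_monomial_unit c_unit)
      also have "\<dots> = L x0 + k + L (\<Sum>b\<in>Basis. ((x - x0) \<bullet> b) *\<^sub>R b)"
        by (simp add: linear_sum[OF assms(2)] linear_scale[OF assms(2)] o_def)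
      also have "\<dots> = L x0 + k + L (x - x0)" by (simp add: euclidean_representation)
      finally show "L x + k = (\<Sum>\<alpha>\<in>B. basis_monomial (x - x0) \<alpha> *\<^sub>R c \<alpha>)"
        using assms(2) by (simp add: linear_diff)
    qed
  qed (use r in auto)
qed

section \<open>Coordinate selections\<close>

(* Precomposing a power series with a general linear map would require re-expanding
   it; for these maps it only relabels the monomials (has_sum_basis_monomial_reindex). *)
definition coordinate_selection :: "('a::euclidean_space \<Rightarrow> 'b::euclidean_space) \<Rightarrow> bool" where
  "coordinate_selection h \<longleftrightarrow>
     (\<exists>B \<tau>. B \<subseteq> Basis \<and> inj_on \<tau> B \<and> \<tau> ` B \<subseteq> Basis \<and>
        (\<forall>x y. \<forall>b\<in>B. (h x - h y) \<bullet> b = (x - y) \<bullet> \<tau> b) \<and>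
        (\<forall>x y. \<forall>b\<in>Basis - B. (h x - h y) \<bullet> b = 0))"

lemma coordinate_selectionE:
  assumes "coordinate_selection h"
  obtains B \<tau> where "B \<subseteq> Basis" "inj_on \<tau> B" "\<tau> ` B \<subseteq> Basis"
    "\<And>x y b. b \<in> B \<Longrightarrow> (h x - h y) \<bullet> b = (x - y) \<bullet> \<tau> b"
    "\<And>x y b. b \<in> Basis - B \<Longrightarrow> (h x - h y) \<bullet> b = 0"
  using assms unfolding coordinate_selection_def by metis

lemma coordinate_selectionI:
  assumes "\<And>x b. b \<in> Basis \<Longrightarrow> p x \<bullet> b = x \<bullet> e b" "inj_on e Basis" "e ` Basis \<subseteq> Basis"
  shows "coordinate_selection p"
  unfolding coordinate_selection_def using assms
  by (intro exI[of _ Basis] exI[of _ e]) (auto simp: inner_diff_left)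

lemma coordinate_selection_id: "coordinate_selection (\<lambda>x. x)"
  by (rule coordinate_selectionI[of _ "\<lambda>b. b"]) auto

lemma coordinate_selection_fst: "coordinate_selection fst"
  by (rule coordinate_selectionI[of _ "\<lambda>b. (b, 0)"]) (auto simp: inner_Pair_0 Basis_prod_def inj_on_def)

lemma coordinate_selection_Pair_const:
  fixes h :: "'a::euclidean_space \<Rightarrow> 'b::euclidean_space" and a :: "'c::euclidean_space"
  assumes "coordinate_selection h"
  shows "coordinate_selection (\<lambda>x. (h x, a))"
proof -
  obtain B \<tau> where B: "B \<subseteq> Basis" "inj_on \<tau> B" "\<tau> ` B \<subseteq> Basis"
    and copy: "\<And>x y b. b \<in> B \<Longrightarrow> (h x - h y) \<bullet> b = (x - y) \<bullet> \<tau> b"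
    and const: "\<And>x y b. b \<in> Basis - B \<Longrightarrow> (h x - h y) \<bullet> b = 0"
    using coordinate_selectionE[OF assms] by metis
  show ?thesis
    unfolding coordinate_selection_def
  proof (intro exI[of _ "(\<lambda>b. (b, 0::'c)) ` B"] exI[of _ "\<lambda>z. \<tau> (fst z)"] conjI allI ballI)
    show "(\<lambda>b. (b, 0::'c)) ` B \<subseteq> Basis"
      using B(1) by (auto simp: Basis_prod_def)
    show "inj_on (\<lambda>z. \<tau> (fst z)) ((\<lambda>b. (b, 0::'c)) ` B)"
      using B(2) by (auto simp: inj_on_def)
    show "(\<lambda>z. \<tau> (fst z)) ` (\<lambda>b. (b, 0::'c)) ` B \<subseteq> Basis"
      using B(3) by auto
    fix x y z
    show "((h x, a) - (h y, a)) \<bullet> z = (x - y) \<bullet> \<tau> (fst z)" if "z \<in> (\<lambda>b. (b, 0)) ` B"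
      using that copy by (auto simp: inner_Pair_0)
    show "((h x, a) - (h y, a)) \<bullet> z = 0" if "z \<in> Basis - (\<lambda>b. (b, 0)) ` B"
      using that const by (auto simp: Basis_prod_def inner_Pair_0 image_iff)
  qed
qed

lemma coordinate_selection_dist_le:
  assumes "coordinate_selection h"
  shows "dist (h x) (h y) \<le> dist x y"
proof -
  obtain B \<tau> where B: "B \<subseteq> Basis" "inj_on \<tau> B" "\<tau> ` B \<subseteq> Basis"
    and copy: "\<And>b. b \<in> B \<Longrightarrow> (h x - h y) \<bullet> b = (x - y) \<bullet> \<tau> b"
    and const: "\<And>b. b \<in> Basis - B \<Longrightarrow> (h x - h y) \<bullet> b = 0"
    using coordinate_selectionE[OF assms] by metis
  have "(h x - h y) \<bullet> (h x - h y) = (\<Sum>b\<in>Basis. ((h x - h y) \<bullet> b) * ((h x - h y) \<bullet> b))"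
    by (rule euclidean_inner)
  also have "\<dots> = (\<Sum>b\<in>B. ((h x - h y) \<bullet> b) * ((h x - h y) \<bullet> b))"
    using B const by (intro sum.mono_neutral_right) auto
  also have "\<dots> = (\<Sum>b\<in>\<tau> ` B. ((x - y) \<bullet> b) * ((x - y) \<bullet> b))"
    using B copy by (simp add: sum.reindex)
  also have "\<dots> \<le> (\<Sum>b\<in>Basis. ((x - y) \<bullet> b) * ((x - y) \<bullet> b))"
    using B by (intro sum_mono2) auto
  also have "\<dots> = (x - y) \<bullet> (x - y)" by (rule euclidean_inner[symmetric])
  finally show ?thesis unfolding dist_norm by (simp add: norm_le)
qed

lemma coordinate_selection_continuous_on:
  assumes "coordinate_selection h"
  shows "continuous_on S h"
proof (rule lipschitz_on_continuous_on)
  show "1-lipschitz_on S h"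
    using coordinate_selection_dist_le[OF assms] by (intro lipschitz_onI) simp_all
qed

lemma continuous_on_compose_coordinate_selection:
  "coordinate_selection h \<Longrightarrow> continuous_on S f \<Longrightarrow> continuous_on S (\<lambda>x. h (f x))"
  using continuous_on_compose2[OF coordinate_selection_continuous_on[of h UNIV]] by blast

lemma has_sum_basis_monomial_reindex:
  fixes v :: "'b::euclidean_space" and u :: "'a::euclidean_space"
    and c :: "('b \<Rightarrow> nat) \<Rightarrow> 'c::real_normed_vector"
  assumes B: "B \<subseteq> Basis" "inj_on \<tau> B" "\<tau> ` B \<subseteq> Basis"
    and copy: "\<And>b. b \<in> B \<Longrightarrow> v \<bullet> b = u \<bullet> \<tau> b"
    and const: "\<And>b. b \<in> Basis - B \<Longrightarrow> v \<bullet> b = 0"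
    and sum: "((\<lambda>\<alpha>. basis_monomial v \<alpha> *\<^sub>R c \<alpha>) has_sum s) multi_indices"
  shows "((\<lambda>\<beta>. basis_monomial u \<beta> *\<^sub>R
            (if \<forall>b. b \<notin> \<tau> ` B \<longrightarrow> \<beta> b = 0 then c (\<lambda>b. if b \<in> B then \<beta> (\<tau> b) else 0) else 0))
          has_sum s) multi_indices"
proof -
  define A1 where "A1 = {\<alpha> :: 'b \<Rightarrow> nat. \<forall>b. b \<notin> B \<longrightarrow> \<alpha> b = 0}"
  define A2 where "A2 = {\<beta> :: 'a \<Rightarrow> nat. \<forall>b. b \<notin> \<tau> ` B \<longrightarrow> \<beta> b = 0}"
  define R where "R \<beta> = (\<lambda>b. if b \<in> B then \<beta> (\<tau> b) else 0)" for \<beta> :: "'a \<Rightarrow> nat"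
  define Ri where "Ri \<alpha> = (\<lambda>b. if b \<in> \<tau> ` B then \<alpha> (inv_into B \<tau> b) else 0)" for \<alpha> :: "'b \<Rightarrow> nat"
  let ?f = "\<lambda>\<alpha>. basis_monomial v \<alpha> *\<^sub>R c \<alpha>"
  have vanish: "basis_monomial v \<alpha> = 0" if "\<alpha> \<in> multi_indices - A1" for \<alpha>
  proof -
    from that obtain b where "b \<in> Basis" "b \<notin> B" "\<alpha> b \<noteq> 0"
      unfolding A1_def multi_indices_def by blast
    then show ?thesis
      unfolding basis_monomial_def using const[of b] by auto
  qed
  have relabel: "basis_monomial v (R \<beta>) = basis_monomial u \<beta>" if "\<beta> \<in> A2" for \<beta>
  proof -
    have "basis_monomial v (R \<beta>) = (\<Prod>b\<in>B. (v \<bullet> b) ^ R \<beta> b)"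
      unfolding basis_monomial_def using B by (intro prod.mono_neutral_right) (auto simp: R_def)
    also have "\<dots> = (\<Prod>b\<in>B. (u \<bullet> \<tau> b) ^ \<beta> (\<tau> b))"
      using copy by (intro prod.cong) (auto simp: R_def)
    also have "\<dots> = (\<Prod>b\<in>\<tau> ` B. (u \<bullet> b) ^ \<beta> b)"
      using B by (simp add: prod.reindex)
    also have "\<dots> = basis_monomial u \<beta>"
      unfolding basis_monomial_def using B that by (intro prod.mono_neutral_left) (auto simp: A2_def)
    finally show ?thesis .
  qed
  have "(?f has_sum s) A1"
  proof (subst has_sum_cong_neutral[where T = multi_indices and g = ?f])
    show "?f \<alpha> = 0" if "\<alpha> \<in> multi_indices - A1" for \<alpha>
      using vanish[OF that] by simp
    show "?f \<alpha> = 0" if "\<alpha> \<in> A1 - multi_indices" for \<alpha>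
      using that B(1) unfolding A1_def multi_indices_def by blast
  qed (use sum in auto)
  then have "((\<lambda>\<beta>. ?f (R \<beta>)) has_sum s) A2"
  proof (subst has_sum_reindex_bij_witness[where i = Ri and j = R and T = A1 and h = ?f])
    show "Ri (R \<beta>) = \<beta>" if "\<beta> \<in> A2" for \<beta>
      using that B(2) unfolding A2_def Ri_def R_def by (auto simp: fun_eq_iff)
    show "R (Ri \<alpha>) = \<alpha>" if "\<alpha> \<in> A1" for \<alpha>
      using that B(2) unfolding A1_def Ri_def R_def by (auto simp: fun_eq_iff)
  qed (auto simp: A1_def A2_def R_def Ri_def)
  then have "((\<lambda>\<beta>. basis_monomial u \<beta> *\<^sub>R c (R \<beta>)) has_sum s) A2"
    by (rule has_sum_cong[THEN iffD1, rotated]) (simp add: relabel)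
  moreover have "A2 \<subseteq> multi_indices"
    using B(3) unfolding A2_def multi_indices_def by blast
  ultimately show ?thesis
    by (subst has_sum_cong_neutral[where T = A2]) (auto simp: A2_def R_def)
qed

lemma real_analytic_on_compose_selection:
  assumes G: "real_analytic_on G W" and h: "coordinate_selection h"
  shows "real_analytic_on (\<lambda>x. G (h x)) (h -` W)"
  unfolding real_analytic_on_iff
proof
  obtain B \<tau> where B: "B \<subseteq> Basis" "inj_on \<tau> B" "\<tau> ` B \<subseteq> Basis"
    and copy: "\<And>x y b. b \<in> B \<Longrightarrow> (h x - h y) \<bullet> b = (x - y) \<bullet> \<tau> b"
    and const: "\<And>x y b. b \<in> Basis - B \<Longrightarrow> (h x - h y) \<bullet> b = 0"
    using coordinate_selectionE[OF h] by metis
  fix x0 assume "x0 \<in> h -` W"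
  then obtain r c where r: "r > 0" "ball (h x0) r \<subseteq> W"
    "\<forall>y\<in>ball (h x0) r. ((\<lambda>\<alpha>. basis_monomial (y - h x0) \<alpha> *\<^sub>R c \<alpha>) has_sum G y) multi_indices"
    using G unfolding real_analytic_on_iff by blast
  have h_ball: "h x \<in> ball (h x0) r" if "x \<in> ball x0 r" for x
    using that coordinate_selection_dist_le[OF h, of x0 x] by simp
  show "\<exists>r>0. ball x0 r \<subseteq> h -` W \<and> (\<exists>c. \<forall>x\<in>ball x0 r.
      ((\<lambda>\<alpha>. basis_monomial (x - x0) \<alpha> *\<^sub>R c \<alpha>) has_sum G (h x)) multi_indices)"
  proof (intro exI[of _ r] conjI exI ballI)
    show "r > 0" using r(1) .
    show "ball x0 r \<subseteq> h -` W" using r(2) h_ball by blast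
    fix x assume "x \<in> ball x0 r"
    then show "((\<lambda>\<beta>. basis_monomial (x - x0) \<beta> *\<^sub>R
        (if \<forall>b. b \<notin> \<tau> ` B \<longrightarrow> \<beta> b = 0 then c (\<lambda>b. if b \<in> B then \<beta> (\<tau> b) else 0) else 0))
        has_sum G (h x)) multi_indices"
      using r(3) h_ball by (intro has_sum_basis_monomial_reindex[OF B copy const]) auto
  qed
qed

lemma analytic_map_on_local:
  assumes "\<And>x. x \<in> S \<Longrightarrow> \<exists>W. open W \<and> x \<in> W \<and> analytic_map_on f (S \<inter> W)"
  shows "analytic_map_on f S"
  unfolding analytic_map_on_def
proof
  fix x assume x: "x \<in> S"
  then obtain W where W: "open W" "x \<in> W" "analytic_map_on f (S \<inter> W)"
    using assms by blast
  then obtain W' G where W': "open W'" "x \<in> W'" "real_analytic_on G W'" "\<forall>y\<in>S \<inter> W \<inter> W'. G y = f y"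
    using x unfolding analytic_map_on_def by blast
  have "real_analytic_on G (W \<inter> W')"
    by (rule real_analytic_on_subset[OF W'(3)]) (use W(1) W'(1) in auto)
  with W W' show "\<exists>W G. open W \<and> x \<in> W \<and> real_analytic_on G W \<and> (\<forall>y\<in>S \<inter> W. G y = f y)"
    by (intro exI[of _ "W \<inter> W'"] exI[of _ G]) auto
qed

lemma analytic_map_on_cong:
  assumes "analytic_map_on f S" "\<And>x. x \<in> S \<Longrightarrow> f x = g x"
  shows "analytic_map_on g S"
  unfolding analytic_map_on_def
proof
  fix x assume "x \<in> S"
  then obtain W G where "open W" "x \<in> W" "real_analytic_on G W" "\<forall>y\<in>S \<inter> W. G y = f y"
    using assms(1) unfolding analytic_map_on_def by blast
  with assms(2) show "\<exists>W G. open W \<and> x \<in> W \<and> real_analytic_on G W \<and> (\<forall>y\<in>S \<inter> W. G y = g y)"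
    by (intro exI[of _ W] exI[of _ G]) auto
qed

lemma analytic_map_on_add:
  assumes "analytic_map_on f S" "analytic_map_on g S"
  shows "analytic_map_on (\<lambda>x. f x + g x) S"
  unfolding analytic_map_on_def
proof
  fix x assume "x \<in> S"
  then obtain W1 F W2 G where
    F: "open W1" "x \<in> W1" "real_analytic_on F W1" "\<forall>y\<in>S \<inter> W1. F y = f y" and
    G: "open W2" "x \<in> W2" "real_analytic_on G W2" "\<forall>y\<in>S \<inter> W2. G y = g y"
    using assms unfolding analytic_map_on_def by meson
  have "real_analytic_on F (W1 \<inter> W2)" "real_analytic_on G (W1 \<inter> W2)"
    using F(1,3) G(1,3) by (auto intro: real_analytic_on_subset)
  then have "real_analytic_on (\<lambda>y. F y + G y) (W1 \<inter> W2)"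
    by (rule real_analytic_on_add)
  with F G show "\<exists>W H. open W \<and> x \<in> W \<and> real_analytic_on H W \<and> (\<forall>y\<in>S \<inter> W. H y = f y + g y)"
    by (intro exI[of _ "W1 \<inter> W2"] exI[of _ "\<lambda>y. F y + G y"]) auto
qed

lemma analytic_map_on_linear_compose:
  assumes "analytic_map_on f S" "linear L"
  shows "analytic_map_on (\<lambda>x. L (f x)) S"
  unfolding analytic_map_on_def
proof
  fix x assume "x \<in> S"
  then obtain W F where "open W" "x \<in> W" "real_analytic_on F W" "\<forall>y\<in>S \<inter> W. F y = f y"
    using assms(1) unfolding analytic_map_on_def by blast
  then show "\<exists>W G. open W \<and> x \<in> W \<and> real_analytic_on G W \<and> (\<forall>y\<in>S \<inter> W. G y = L (f y))"
    using real_analytic_on_linear_compose[OF _ assms(2)] by (intro exI[of _ W] exI[of _ "\<lambda>y. L (F y)"]) auto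
qed

lemma analytic_map_on_compose_selection:
  assumes "analytic_map_on g T" "coordinate_selection h" "h ` S \<subseteq> T"
  shows "analytic_map_on (\<lambda>x. g (h x)) S"
  unfolding analytic_map_on_def
proof
  fix x assume "x \<in> S"
  then obtain W G where W: "open W" "h x \<in> W" "real_analytic_on G W" "\<forall>y\<in>T \<inter> W. G y = g y"
    using assms(1,3) unfolding analytic_map_on_def by blast
  have "real_analytic_on (\<lambda>y. G (h y)) (h -` W)"
    using W(3) assms(2) by (rule real_analytic_on_compose_selection)
  with W assms(3) \<open>x \<in> S\<close>
  show "\<exists>W G. open W \<and> x \<in> W \<and> real_analytic_on G W \<and> (\<forall>y\<in>S \<inter> W. G y = g (h y))"
    by (intro exI[of _ "h -` W"] exI[of _ "\<lambda>y. G (h y)"]) (auto dest: real_analytic_on_imp_open)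
qed

lemma analytic_map_on_affine:
  assumes "linear L"
  shows "analytic_map_on (\<lambda>x. L x + k) S"
  unfolding analytic_map_on_def
  using real_analytic_on_affine[OF open_UNIV assms]
  by (intro ballI exI[of _ UNIV] exI[of _ "\<lambda>y. L y + k"]) auto

lemma analytic_map_on_linear: "linear L \<Longrightarrow> analytic_map_on L S"
  using analytic_map_on_affine[of L 0 S] by simp

lemma locally_constant_on_finite_range:
  fixes q :: "'a::topological_space \<Rightarrow> 'b::t1_space"
  assumes "continuous_on S q" "finite (q ` S)" "x \<in> S"
  obtains W where "open W" "x \<in> W" "\<And>y. y \<in> S \<inter> W \<Longrightarrow> q y = q x"
proof -
  have "open (- (q ` S - {q x}))"
    using assms(2) by (intro open_Compl finite_imp_closed) simp
  then obtain W where "open W" "W \<inter> S = q -` (- (q ` S - {q x})) \<inter> S"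
    using assms(1) unfolding continuous_on_open_invariant by blast
  then show ?thesis
    using assms(3) by (intro that[of W]) auto
qed

lemma analytic_map_on_finite_range:
  assumes "continuous_on S q" "finite (q ` S)"
  shows "analytic_map_on q S"
proof (rule analytic_map_on_local)
  fix x assume "x \<in> S"
  then obtain W where W: "open W" "x \<in> W" "\<And>y. y \<in> S \<inter> W \<Longrightarrow> q y = q x"
    using assms locally_constant_on_finite_range by metis
  have "analytic_map_on (\<lambda>_. q x) (S \<inter> W)"
    using analytic_map_on_affine[OF linear_zero, of "q x"] by simp
  then have "analytic_map_on q (S \<inter> W)"
    by (rule analytic_map_on_cong) (use W(3) in auto)
  with W(1,2) show "\<exists>W. open W \<and> x \<in> W \<and> analytic_map_on q (S \<inter> W)" by blast
qed

lemma analytic_map_on_Pair_finite_range: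
  assumes "analytic_map_on f S" "continuous_on S q" "finite (q ` S)"
  shows "analytic_map_on (\<lambda>x. (f x, q x)) S"
proof -
  have "linear (\<lambda>z. (z, 0))"
    by (simp add: linear_iff)
  then have "analytic_map_on (\<lambda>x. (f x, 0)) S"
    using analytic_map_on_linear_compose[OF assms(1)] by blast
  moreover have "analytic_map_on (\<lambda>x. (0, q x)) S"
    using assms(2) finite_imageI[OF assms(3), of "Pair 0"]
    by (intro analytic_map_on_finite_range continuous_intros) (simp_all add: image_image)
  ultimately have "analytic_map_on (\<lambda>x. (f x, 0) + (0, q x)) S"
    by (rule analytic_map_on_add)
  then show ?thesis by simp
qed

lemma analytic_map_on_finite_fibres:
  assumes "finite E" "\<And>a. a \<in> E \<Longrightarrow> analytic_map_on (\<lambda>u. F (u, a)) U"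
  shows "analytic_map_on F (U \<times> E)"
proof (rule analytic_map_on_local)
  fix z assume z: "z \<in> U \<times> E"
  have "finite (snd ` (U \<times> E))"
    using assms(1) by (rule finite_subset[rotated]) auto
  then obtain W where W: "open W" "z \<in> W" "\<And>y. y \<in> (U \<times> E) \<inter> W \<Longrightarrow> snd y = snd z"
    using locally_constant_on_finite_range[OF continuous_on_snd[OF continuous_on_id] _ z] by metis
  have "analytic_map_on (\<lambda>y. F (fst y, snd z)) ((U \<times> E) \<inter> W)"
    using z by (intro analytic_map_on_compose_selection[OF assms(2) coordinate_selection_fst]) auto
  then have "analytic_map_on F ((U \<times> E) \<inter> W)"
    by (rule analytic_map_on_cong) (use W(3) in \<open>auto simp: prod_eq_iff\<close>)
  with W(1,2) show "\<exists>W. open W \<and> z \<in> W \<and> analytic_map_on F ((U \<times> E) \<inter> W)" by blast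
qed

definition analytic_trivialisation ::
  "('f::euclidean_space \<Rightarrow> 'x::euclidean_space) \<Rightarrow> 'x set \<Rightarrow> 'e::euclidean_space set \<Rightarrow> 'f set
     \<Rightarrow> ('x \<times> 'e \<Rightarrow> 'f) \<Rightarrow> bool" where
  "analytic_trivialisation q U E T \<sigma> \<longleftrightarrow>
     finite E \<and> analytic_iso (U \<times> E) T \<sigma> \<and> (\<forall>u\<in>U. \<forall>c\<in>E. q (\<sigma> (u, c)) = u)"

lemma analytic_iso_reindex_fibre:
  fixes \<sigma> :: "'x::euclidean_space \<times> 'e::euclidean_space \<Rightarrow> 'f::euclidean_space"
    and enc :: "'e \<Rightarrow> 'e2::euclidean_space"
  assumes iso: "analytic_iso (U \<times> E) T \<sigma>" and "finite E" "inj_on enc E"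
  shows "analytic_iso (U \<times> enc ` E) T (\<lambda>z. \<sigma> (fst z, inv_into E enc (snd z)))"
proof -
  define dec where "dec = inv_into E enc"
  obtain g where g: "homeomorphism (U \<times> E) T \<sigma> g" "analytic_map_on \<sigma> (U \<times> E)" "analytic_map_on g T"
    using iso unfolding analytic_iso_def by blast
  have dec_enc: "dec (enc c) = c" if "c \<in> E" for c
    unfolding dec_def using assms(3) that by (rule inv_into_f_f)
  have dec_E: "dec a \<in> E" if "a \<in> enc ` E" for a
    using that by (auto simp: dec_enc)
  have "homeomorphism (U \<times> enc ` E) (U \<times> E) (\<lambda>z. (fst z, dec (snd z))) (\<lambda>z. (fst z, enc (snd z)))"
  proof (rule homeomorphismI)
    have "continuous_on (enc ` E) dec"
      using assms(2) by (intro continuous_on_finite finite_imageI)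
    then show "continuous_on (U \<times> enc ` E) (\<lambda>z. (fst z, dec (snd z)))"
      by (intro continuous_on_Pair continuous_on_fst continuous_on_id
          continuous_on_compose2[of "enc ` E" dec _ snd]) (auto intro: continuous_on_snd continuous_on_id)
    have "continuous_on E enc"
      using assms(2) by (rule continuous_on_finite)
    then show "continuous_on (U \<times> E) (\<lambda>z. (fst z, enc (snd z)))"
      by (intro continuous_on_Pair continuous_on_fst continuous_on_id
          continuous_on_compose2[of E enc _ snd]) (auto intro: continuous_on_snd continuous_on_id)
  qed (auto simp: dec_enc dec_E)
  from homeomorphism_compose[OF this g(1)]
  have hom: "homeomorphism (U \<times> enc ` E) T (\<lambda>z. \<sigma> (fst z, dec (snd z))) (\<lambda>\<phi>. (fst (g \<phi>), enc (snd (g \<phi>))))"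
    by (simp add: o_def)
  have "analytic_map_on (\<lambda>z. \<sigma> (fst z, dec (snd z))) (U \<times> enc ` E)"
  proof (rule analytic_map_on_finite_fibres)
    fix a assume "a \<in> enc ` E"
    then have "dec a \<in> E" by (rule dec_E)
    then show "analytic_map_on (\<lambda>u. \<sigma> (fst (u, a), dec (snd (u, a)))) U"
      using analytic_map_on_compose_selection[OF g(2) coordinate_selection_Pair_const[OF coordinate_selection_id]]
      by auto
  qed (use assms(2) in simp)
  moreover have "analytic_map_on (\<lambda>\<phi>. (fst (g \<phi>), enc (snd (g \<phi>)))) T"
  proof (rule analytic_map_on_Pair_finite_range)
    show "analytic_map_on (\<lambda>\<phi>. fst (g \<phi>)) T"
      using g(3) linear_fst by (rule analytic_map_on_linear_compose)
    have "continuous_on T g" "g ` T \<subseteq> U \<times> E"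
      using g(1) unfolding homeomorphism_def by auto
    then have "continuous_on T (\<lambda>\<phi>. snd (g \<phi>))" "(\<lambda>\<phi>. snd (g \<phi>)) ` T \<subseteq> E"
      by (auto intro: continuous_on_snd)
    then show "continuous_on T (\<lambda>\<phi>. enc (snd (g \<phi>)))"
      by (rule continuous_on_compose2[OF continuous_on_finite[OF assms(2)]])
    show "finite ((\<lambda>\<phi>. enc (snd (g \<phi>))) ` T)"
      by (rule finite_subset[of _ "enc ` E"]) (use \<open>g ` T \<subseteq> U \<times> E\<close> assms(2) in auto)
  qed
  ultimately show ?thesis
    unfolding analytic_iso_def dec_def[symmetric] using hom by blast
qed

lemma analytic_trivialisation_real_fibre:
  assumes "analytic_trivialisation q U E T \<sigma>"
  obtains E' :: "real set" and \<sigma>' where "analytic_trivialisation q U E' T \<sigma>'"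
proof -
  define enc where "enc c = real (to_nat_on E c)" for c
  have "finite E" using assms unfolding analytic_trivialisation_def by blast
  then have "inj_on enc E"
    unfolding enc_def using inj_on_to_nat_on[OF countable_finite] by (auto simp: inj_on_def)
  then have "analytic_trivialisation q U (enc ` E) T (\<lambda>z. \<sigma> (fst z, inv_into E enc (snd z)))"
    using assms \<open>finite E\<close> unfolding analytic_trivialisation_def
    by (auto intro: analytic_iso_reindex_fibre)
  then show ?thesis by (rule that)
qed

lemma functional_rd_iff:
  "functional_rd L ws vs f U \<longleftrightarrow>
     quasifunctional L ws vs f \<and> U \<subseteq> evmap ws ` conf L \<and>
     (\<exists>(E :: real set) \<sigma>. analytic_trivialisation (evmap ws) U E {\<phi>\<in>conf L. evmap ws \<phi> \<in> U} \<sigma>)"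
  unfolding functional_rd_def analytic_trivialisation_def by blast

(* ev is the input map of a linkage whose configurations \<phi> have parts K0 \<phi> and K1 \<phi> in two
   component linkages, with \<phi> = J0 (K0 \<phi>) + J1 (K1 \<phi>); p0 and p1 select the inputs of the
   parts from the input of the whole. *)
locale linear_decomposition =
  fixes ev :: "'f::euclidean_space \<Rightarrow> 'x::euclidean_space"
    and p0 :: "'x \<Rightarrow> 'x0::euclidean_space" and p1 :: "'x \<Rightarrow> 'x1::euclidean_space"
    and J0 :: "'f0::euclidean_space \<Rightarrow> 'f" and J1 :: "'f1::euclidean_space \<Rightarrow> 'f"
    and K0 :: "'f \<Rightarrow> 'f0" and K1 :: "'f \<Rightarrow> 'f1"
  assumes linear_ev: "linear ev"
    and selection_p0: "coordinate_selection p0" and selection_p1: "coordinate_selection p1"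
    and linear_J0: "linear J0" and linear_J1: "linear J1"
    and linear_K0: "linear K0" and linear_K1: "linear K1"
begin

lemma analytic_iso_evaluation:
  fixes ev0 :: "'f0 \<Rightarrow> 'x0" and ev1 :: "'f1 \<Rightarrow> 'x1"
  assumes iso0: "analytic_iso C0 (ev0 ` C0) ev0" and iso1: "analytic_iso C1 (ev1 ` C1) ev1"
    and split: "\<And>\<phi>. \<phi> \<in> C \<Longrightarrow> K0 \<phi> \<in> C0 \<and> K1 \<phi> \<in> C1 \<and> J0 (K0 \<phi>) + J1 (K1 \<phi>) = \<phi> \<and>
                    p0 (ev \<phi>) = ev0 (K0 \<phi>) \<and> p1 (ev \<phi>) = ev1 (K1 \<phi>)"
  shows "analytic_iso C (ev ` C) ev"
proof -
  obtain g0 where g0: "homeomorphism C0 (ev0 ` C0) ev0 g0" "analytic_map_on g0 (ev0 ` C0)"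
    using iso0 unfolding analytic_iso_def by blast
  obtain g1 where g1: "homeomorphism C1 (ev1 ` C1) ev1 g1" "analytic_map_on g1 (ev1 ` C1)"
    using iso1 unfolding analytic_iso_def by blast
  define g where "g u = J0 (g0 (p0 u)) + J1 (g1 (p1 u))" for u
  have g_ev: "g (ev \<phi>) = \<phi>" if "\<phi> \<in> C" for \<phi>
  proof -
    have "g0 (ev0 (K0 \<phi>)) = K0 \<phi>" "g1 (ev1 (K1 \<phi>)) = K1 \<phi>"
      using split[OF that] g0(1) g1(1) unfolding homeomorphism_def by auto
    then show ?thesis using split[OF that] by (simp add: g_def)
  qed
  have p0C: "p0 ` ev ` C \<subseteq> ev0 ` C0" and p1C: "p1 ` ev ` C \<subseteq> ev1 ` C1"
    using split by force+
  have "continuous_on (ev ` C) g"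
  proof -
    have "continuous_on (ev0 ` C0) g0" "continuous_on (ev1 ` C1) g1"
      using g0(1) g1(1) unfolding homeomorphism_def by auto
    then have "continuous_on (ev ` C) (\<lambda>u. g0 (p0 u))" "continuous_on (ev ` C) (\<lambda>u. g1 (p1 u))"
      using continuous_on_compose2[OF _ coordinate_selection_continuous_on[OF selection_p0] p0C]
        continuous_on_compose2[OF _ coordinate_selection_continuous_on[OF selection_p1] p1C]
      by blast+
    then show ?thesis
      unfolding g_def
      by (intro continuous_on_add linear_continuous_on_compose[OF _ linear_J0]
          linear_continuous_on_compose[OF _ linear_J1])
  qed
  then have "homeomorphism C (ev ` C) ev g"
  proof (rule homeomorphismI[rotated])
    show "continuous_on C ev" using linear_continuous_on_compose[OF continuous_on_id linear_ev] by simp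
  qed (use g_ev in auto)
  moreover have "analytic_map_on g (ev ` C)"
    unfolding g_def
    by (intro analytic_map_on_add analytic_map_on_linear_compose[OF _ linear_J0]
        analytic_map_on_linear_compose[OF _ linear_J1]
        analytic_map_on_compose_selection[OF g0(2) selection_p0 p0C]
        analytic_map_on_compose_selection[OF g1(2) selection_p1 p1C])
  ultimately show ?thesis
    unfolding analytic_iso_def using analytic_map_on_linear[OF linear_ev] by blast
qed

context
  fixes U :: "'x set" and T :: "'f set"
    and U0 :: "'x0 set" and T0 :: "'f0 set" and ev0 :: "'f0 \<Rightarrow> 'x0"
    and U1 :: "'x1 set" and T1 :: "'f1 set" and ev1 :: "'f1 \<Rightarrow> 'x1"
  assumes split_input: "\<And>u. u \<in> U \<Longrightarrow> p0 u \<in> U0 \<and> p1 u \<in> U1"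
    and glue: "\<And>u \<phi>0 \<phi>1. \<lbrakk>u \<in> U; \<phi>0 \<in> T0; \<phi>1 \<in> T1; ev0 \<phi>0 = p0 u; ev1 \<phi>1 = p1 u\<rbrakk> \<Longrightarrow>
        J0 \<phi>0 + J1 \<phi>1 \<in> T \<and> ev (J0 \<phi>0 + J1 \<phi>1) = u \<and>
        K0 (J0 \<phi>0 + J1 \<phi>1) = \<phi>0 \<and> K1 (J0 \<phi>0 + J1 \<phi>1) = \<phi>1"
    and split: "\<And>\<phi>. \<phi> \<in> T \<Longrightarrow> K0 \<phi> \<in> T0 \<and> K1 \<phi> \<in> T1 \<and> J0 (K0 \<phi>) + J1 (K1 \<phi>) = \<phi> \<and>
        ev \<phi> \<in> U \<and> p0 (ev \<phi>) = ev0 (K0 \<phi>) \<and> p1 (ev \<phi>) = ev1 (K1 \<phi>)"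
begin

lemma continuous_on_combined_parametrisation:
  fixes \<sigma>0 :: "'x0 \<times> 'e0::euclidean_space \<Rightarrow> 'f0" and \<sigma>1 :: "'x1 \<times> 'e1::euclidean_space \<Rightarrow> 'f1"
  assumes "continuous_on (U0 \<times> E0) \<sigma>0" "continuous_on (U1 \<times> E1) \<sigma>1"
  shows "continuous_on (U \<times> (E0 \<times> E1))
           (\<lambda>z. J0 (\<sigma>0 (p0 (fst z), fst (snd z))) + J1 (\<sigma>1 (p1 (fst z), snd (snd z))))"
proof -
  have "continuous_on (U \<times> (E0 \<times> E1)) (\<lambda>z. (p0 (fst z), fst (snd z)))"
    "continuous_on (U \<times> (E0 \<times> E1)) (\<lambda>z. (p1 (fst z), snd (snd z)))"
    by (intro continuous_on_Pair continuous_on_compose_coordinate_selection[OF selection_p0]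
        continuous_on_compose_coordinate_selection[OF selection_p1]
        continuous_on_fst continuous_on_snd continuous_on_id)+
  moreover have "(\<lambda>z. (p0 (fst z), fst (snd z))) ` (U \<times> (E0 \<times> E1)) \<subseteq> U0 \<times> E0"
    "(\<lambda>z. (p1 (fst z), snd (snd z))) ` (U \<times> (E0 \<times> E1)) \<subseteq> U1 \<times> E1"
    using split_input by auto
  ultimately have "continuous_on (U \<times> (E0 \<times> E1)) (\<lambda>z. \<sigma>0 (p0 (fst z), fst (snd z)))"
    "continuous_on (U \<times> (E0 \<times> E1)) (\<lambda>z. \<sigma>1 (p1 (fst z), snd (snd z)))"
    using continuous_on_compose2[OF assms(1)] continuous_on_compose2[OF assms(2)] by blast+
  then show ?thesis
    by (intro continuous_on_add linear_continuous_on_compose[OF _ linear_J0]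
        linear_continuous_on_compose[OF _ linear_J1])
qed

lemma continuous_on_combined_inverse:
  fixes g0 :: "'f0 \<Rightarrow> 'x0 \<times> 'e0::euclidean_space" and g1 :: "'f1 \<Rightarrow> 'x1 \<times> 'e1::euclidean_space"
  assumes "continuous_on T0 g0" "continuous_on T1 g1"
  shows "continuous_on T (\<lambda>\<phi>. (ev \<phi>, snd (g0 (K0 \<phi>)), snd (g1 (K1 \<phi>))))"
proof -
  have "continuous_on T K0" "continuous_on T K1"
    using linear_continuous_on_compose[OF continuous_on_id linear_K0]
      linear_continuous_on_compose[OF continuous_on_id linear_K1] by simp_all
  moreover have "K0 ` T \<subseteq> T0" "K1 ` T \<subseteq> T1"
    using split by auto
  ultimately have "continuous_on T (\<lambda>\<phi>. g0 (K0 \<phi>))" "continuous_on T (\<lambda>\<phi>. g1 (K1 \<phi>))"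
    using continuous_on_compose2[OF assms(1)] continuous_on_compose2[OF assms(2)] by blast+
  then show ?thesis
    by (intro continuous_on_Pair continuous_on_snd linear_continuous_on_compose[OF continuous_on_id linear_ev])
qed

lemma homeomorphism_combined_parametrisation:
  fixes \<sigma>0 :: "'x0 \<times> 'e0::euclidean_space \<Rightarrow> 'f0" and \<sigma>1 :: "'x1 \<times> 'e1::euclidean_space \<Rightarrow> 'f1"
  assumes hom0: "homeomorphism (U0 \<times> E0) T0 \<sigma>0 g0" and ev0_\<sigma>0: "\<forall>u\<in>U0. \<forall>c\<in>E0. ev0 (\<sigma>0 (u, c)) = u"
    and hom1: "homeomorphism (U1 \<times> E1) T1 \<sigma>1 g1" and ev1_\<sigma>1: "\<forall>u\<in>U1. \<forall>c\<in>E1. ev1 (\<sigma>1 (u, c)) = u"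
  shows "homeomorphism (U \<times> (E0 \<times> E1)) T
           (\<lambda>z. J0 (\<sigma>0 (p0 (fst z), fst (snd z))) + J1 (\<sigma>1 (p1 (fst z), snd (snd z))))
           (\<lambda>\<phi>. (ev \<phi>, snd (g0 (K0 \<phi>)), snd (g1 (K1 \<phi>))))"
proof -
  have g0: "g0 \<phi> = (ev0 \<phi>, snd (g0 \<phi>)) \<and> snd (g0 \<phi>) \<in> E0 \<and> \<sigma>0 (g0 \<phi>) = \<phi>" if "\<phi> \<in> T0" for \<phi>
    using hom0 ev0_\<sigma>0 that unfolding homeomorphism_def by (metis imageI mem_Times_iff prod.collapse)
  have g1: "g1 \<phi> = (ev1 \<phi>, snd (g1 \<phi>)) \<and> snd (g1 \<phi>) \<in> E1 \<and> \<sigma>1 (g1 \<phi>) = \<phi>" if "\<phi> \<in> T1" for \<phi>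
    using hom1 ev1_\<sigma>1 that unfolding homeomorphism_def by (metis imageI mem_Times_iff prod.collapse)
  have \<sigma>0: "\<sigma>0 x \<in> T0 \<and> g0 (\<sigma>0 x) = x" if "x \<in> U0 \<times> E0" for x
    using hom0 that unfolding homeomorphism_def by blast
  have \<sigma>1: "\<sigma>1 x \<in> T1 \<and> g1 (\<sigma>1 x) = x" if "x \<in> U1 \<times> E1" for x
    using hom1 that unfolding homeomorphism_def by blast
  define \<sigma> where "\<sigma> z = J0 (\<sigma>0 (p0 (fst z), fst (snd z))) + J1 (\<sigma>1 (p1 (fst z), snd (snd z)))" for z
  define g where "g \<phi> = (ev \<phi>, snd (g0 (K0 \<phi>)), snd (g1 (K1 \<phi>)))" for \<phi>
  have \<sigma>_inverse: "\<sigma> z \<in> T \<and> g (\<sigma> z) = z" if z_in: "z \<in> U \<times> (E0 \<times> E1)" for z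
  proof -
    obtain u a0 a1 where z: "z = (u, a0, a1)" "u \<in> U" "a0 \<in> E0" "a1 \<in> E1"
      using z_in by (metis mem_Times_iff prod.collapse)
    define \<phi>0 \<phi>1 where "\<phi>0 = \<sigma>0 (p0 u, a0)" and "\<phi>1 = \<sigma>1 (p1 u, a1)"
    have "\<phi>0 \<in> T0" "ev0 \<phi>0 = p0 u" "g0 \<phi>0 = (p0 u, a0)"
      using \<sigma>0[of "(p0 u, a0)"] ev0_\<sigma>0 split_input z unfolding \<phi>0_def by auto
    moreover have "\<phi>1 \<in> T1" "ev1 \<phi>1 = p1 u" "g1 \<phi>1 = (p1 u, a1)"
      using \<sigma>1[of "(p1 u, a1)"] ev1_\<sigma>1 split_input z unfolding \<phi>1_def by auto
    ultimately show ?thesis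
      using glue[OF z(2)] z unfolding \<phi>0_def \<phi>1_def \<sigma>_def g_def by auto
  qed
  have g_inverse: "g \<phi> \<in> U \<times> (E0 \<times> E1) \<and> \<sigma> (g \<phi>) = \<phi>" if "\<phi> \<in> T" for \<phi>
    using split[OF that] g0[of "K0 \<phi>"] g1[of "K1 \<phi>"] unfolding \<sigma>_def g_def by (metis fst_conv snd_conv mem_Times_iff)
  have cont: "continuous_on (U0 \<times> E0) \<sigma>0" "continuous_on (U1 \<times> E1) \<sigma>1"
    "continuous_on T0 g0" "continuous_on T1 g1"
    using hom0 hom1 unfolding homeomorphism_def by auto
  have "continuous_on (U \<times> (E0 \<times> E1)) \<sigma>"
    unfolding \<sigma>_def using cont(1,2) by (rule continuous_on_combined_parametrisation)
  moreover have "continuous_on T g"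
    unfolding g_def using cont(3,4) by (rule continuous_on_combined_inverse)
  ultimately have "homeomorphism (U \<times> (E0 \<times> E1)) T \<sigma> g"
  proof (rule homeomorphismI)
    show "\<sigma> ` (U \<times> (E0 \<times> E1)) \<subseteq> T" "g ` T \<subseteq> U \<times> (E0 \<times> E1)"
      using \<sigma>_inverse g_inverse by blast+
  qed (use \<sigma>_inverse g_inverse in blast)+
  then show ?thesis
    unfolding \<sigma>_def g_def .
qed

lemma analytic_trivialisation_combine:
  fixes \<sigma>0 :: "'x0 \<times> 'e0::euclidean_space \<Rightarrow> 'f0" and \<sigma>1 :: "'x1 \<times> 'e1::euclidean_space \<Rightarrow> 'f1"
  assumes P0: "analytic_trivialisation ev0 U0 E0 T0 \<sigma>0"
    and P1: "analytic_trivialisation ev1 U1 E1 T1 \<sigma>1"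
  shows "analytic_trivialisation ev U (E0 \<times> E1) T
           (\<lambda>z. J0 (\<sigma>0 (p0 (fst z), fst (snd z))) + J1 (\<sigma>1 (p1 (fst z), snd (snd z))))"
proof -
  obtain g0 where fin0: "finite E0" and hom0: "homeomorphism (U0 \<times> E0) T0 \<sigma>0 g0"
    and an0: "analytic_map_on \<sigma>0 (U0 \<times> E0)" and ev0_\<sigma>0: "\<forall>u\<in>U0. \<forall>c\<in>E0. ev0 (\<sigma>0 (u, c)) = u"
    using P0 unfolding analytic_trivialisation_def analytic_iso_def by blast
  obtain g1 where fin1: "finite E1" and hom1: "homeomorphism (U1 \<times> E1) T1 \<sigma>1 g1"
    and an1: "analytic_map_on \<sigma>1 (U1 \<times> E1)" and ev1_\<sigma>1: "\<forall>u\<in>U1. \<forall>c\<in>E1. ev1 (\<sigma>1 (u, c)) = u"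
    using P1 unfolding analytic_trivialisation_def analytic_iso_def by blast
  let ?\<sigma> = "\<lambda>z. J0 (\<sigma>0 (p0 (fst z), fst (snd z))) + J1 (\<sigma>1 (p1 (fst z), snd (snd z)))"
  let ?g = "\<lambda>\<phi>. (ev \<phi>, snd (g0 (K0 \<phi>)), snd (g1 (K1 \<phi>)))"
  have hom: "homeomorphism (U \<times> (E0 \<times> E1)) T ?\<sigma> ?g"
    by (rule homeomorphism_combined_parametrisation[OF hom0 ev0_\<sigma>0 hom1 ev1_\<sigma>1])
  have "analytic_map_on ?\<sigma> (U \<times> (E0 \<times> E1))"
  proof (rule analytic_map_on_finite_fibres)
    show "finite (E0 \<times> E1)" using fin0 fin1 by simp
    fix a assume a: "a \<in> E0 \<times> E1"
    have "analytic_map_on (\<lambda>u. \<sigma>0 (p0 u, fst a)) U"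
      using a split_input
      by (intro analytic_map_on_compose_selection[OF an0 coordinate_selection_Pair_const[OF selection_p0]]) auto
    moreover have "analytic_map_on (\<lambda>u. \<sigma>1 (p1 u, snd a)) U"
      using a split_input
      by (intro analytic_map_on_compose_selection[OF an1 coordinate_selection_Pair_const[OF selection_p1]]) auto
    ultimately have "analytic_map_on (\<lambda>u. J0 (\<sigma>0 (p0 u, fst a)) + J1 (\<sigma>1 (p1 u, snd a))) U"
      by (intro analytic_map_on_add analytic_map_on_linear_compose[OF _ linear_J0]
          analytic_map_on_linear_compose[OF _ linear_J1])
    then show "analytic_map_on (\<lambda>u. ?\<sigma> (u, a)) U" by simp
  qed
  moreover have "analytic_map_on ?g T"
  proof (rule analytic_map_on_Pair_finite_range)
    show "analytic_map_on ev T" by (rule analytic_map_on_linear[OF linear_ev])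
    have "continuous_on T ?g" "?g ` T \<subseteq> U \<times> (E0 \<times> E1)"
      using hom unfolding homeomorphism_def by auto
    then show "continuous_on T (\<lambda>\<phi>. (snd (g0 (K0 \<phi>)), snd (g1 (K1 \<phi>))))"
      using continuous_on_snd[of T ?g] by simp
    show "finite ((\<lambda>\<phi>. (snd (g0 (K0 \<phi>)), snd (g1 (K1 \<phi>)))) ` T)"
      by (rule finite_subset[of _ "E0 \<times> E1"]) (use \<open>?g ` T \<subseteq> _\<close> fin0 fin1 in auto)
  qed
  ultimately have iso: "analytic_iso (U \<times> (E0 \<times> E1)) T ?\<sigma>"
    unfolding analytic_iso_def using hom by blast
  have "\<forall>u\<in>U. \<forall>c\<in>E0 \<times> E1. ev (?\<sigma> (u, c)) = u"
  proof (intro ballI)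
    fix u c assume "u \<in> U" "c \<in> E0 \<times> E1"
    then have "?g (?\<sigma> (u, c)) = (u, c)"
      using hom unfolding homeomorphism_def by blast
    then show "ev (?\<sigma> (u, c)) = u" by (simp add: prod_eq_iff)
  qed
  with iso fin0 fin1 show ?thesis
    unfolding analytic_trivialisation_def by blast
qed

end

end

section \<open>Disjoint union\<close>

lemma vjoin_nth [simp]: "vjoin x y $ Inl i = x $ i" "vjoin x y $ Inr j = y $ j"
  by (simp_all add: vjoin_def)

lemma vleft_nth [simp]: "vleft z $ i = z $ Inl i"
  and vright_nth [simp]: "vright z $ j = z $ Inr j"
  by (simp_all add: vleft_def vright_def)

lemma vleft_vjoin [simp]: "vleft (vjoin x y) = x"
  and vright_vjoin [simp]: "vright (vjoin x y) = y"
  by (simp_all add: vec_eq_iff)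

lemma vjoin_vleft_vright [simp]: "vjoin (vleft z) (vright z) = z"
  by (simp add: vec_eq_iff vjoin_def split: sum.split)

lemma vjoin_add_zero: "vjoin (a :: 'p::monoid_add^'k::finite) 0 + vjoin 0 (b :: 'p^'l::finite) = vjoin a b"
  by (simp add: vec_eq_iff vjoin_def split: sum.split)

lemma linear_vleft: "linear (vleft :: ('p::real_vector)^('k::finite + 'l::finite) \<Rightarrow> _)"
  and linear_vright: "linear (vright :: ('p::real_vector)^('k::finite + 'l::finite) \<Rightarrow> _)"
  by (auto intro!: linearI simp: vec_eq_iff)

lemma linear_vjoin_left: "linear (\<lambda>a. vjoin a (0 :: ('p::real_vector)^'l::finite) :: 'p^('k::finite + 'l))"
  and linear_vjoin_right: "linear (\<lambda>b. vjoin (0 :: ('p::real_vector)^'k::finite) b :: 'p^('k + 'l::finite))"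
  by (auto intro!: linearI simp: vec_eq_iff vjoin_def split: sum.split)

lemma sum_UNIV_Plus:
  "sum g (UNIV :: ('k::finite + 'l::finite) set) = (\<Sum>i\<in>UNIV. g (Inl i)) + (\<Sum>j\<in>UNIV. g (Inr j))"
  using sum.Plus[of "UNIV :: 'k set" "UNIV :: 'l set" g] by (simp add: o_def)

lemma inner_vleft: "vleft u \<bullet> y = u \<bullet> vjoin y (0 :: ('p::real_inner)^'l::finite)"
  and inner_vright: "vright u \<bullet> y' = u \<bullet> vjoin (0 :: ('p::real_inner)^'k::finite) y'"
  for u :: "('p::real_inner)^('k::finite + 'l::finite)"
  by (simp_all add: inner_vec_def sum_UNIV_Plus)

lemma vjoin_axis: "vjoin (axis i c) 0 = axis (Inl i) c" "vjoin 0 (axis j c) = axis (Inr j) c"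
  by (simp_all add: vec_eq_iff axis_def vjoin_def split: sum.split)

lemma coordinate_selection_vleft:
  "coordinate_selection (vleft :: (real^'n)^('k::finite + 'l::finite) \<Rightarrow> _)"
proof (rule coordinate_selectionI[OF inner_vleft])
  show "inj_on (\<lambda>b. vjoin b 0 :: (real^'n)^('k + 'l)) Basis"
    by (rule inj_onI) (metis vleft_vjoin)
  show "(\<lambda>b. vjoin b 0 :: (real^'n)^('k + 'l)) ` Basis \<subseteq> Basis"
    by (auto simp: Basis_vec_def vjoin_axis) blast
qed

lemma coordinate_selection_vright:
  "coordinate_selection (vright :: (real^'n)^('k::finite + 'l::finite) \<Rightarrow> _)"
proof (rule coordinate_selectionI[OF inner_vright])
  show "inj_on (\<lambda>b. vjoin 0 b :: (real^'n)^('k + 'l)) Basis"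
    by (rule inj_onI) (metis vright_vjoin)
  show "(\<lambda>b. vjoin 0 b :: (real^'n)^('k + 'l)) ` Basis \<subseteq> Basis"
    by (auto simp: Basis_vec_def vjoin_axis) blast
qed

lemma evmap_nth [simp]: "evmap ws \<phi> $ j = \<phi> $ ws j"
  by (simp add: evmap_def)

lemma linear_evmap: "linear (evmap ws :: (real^'n)^'a::finite \<Rightarrow> (real^'n)^'k::finite)"
  by (auto intro!: linearI simp: vec_eq_iff)

lemma evmap_case_sum:
  "evmap (case_sum (Inl \<circ> ws0) (Inr \<circ> ws1)) \<phi> = vjoin (evmap ws0 (vleft \<phi>)) (evmap ws1 (vright \<phi>))"
  by (simp add: vec_eq_iff vjoin_def split: sum.split)

lemma conf_disj_union_vjoin:
  fixes L0 :: "('v::finite, 'e0, real^'n) linkage" and L1 :: "('w::finite, 'e1, real^'n) linkage"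
  shows "vjoin a b \<in> conf (disj_union L0 L1) \<longleftrightarrow> a \<in> conf L0 \<and> b \<in> conf L1"
proof -
  have diff: "(Inl ` A \<union> Inr ` B) - (Inl ` C \<union> Inr ` D) = Inl ` (A - C) \<union> Inr ` (B - D)"
    for A C :: "'e0 set" and B D :: "'e1 set"
    by auto
  show ?thesis
    unfolding conf_def disj_union_def
    by (simp add: diff ball_Un split_sum_all split_beta map_prod_def image_iff) blast
qed

lemma conf_disj_union:
  "\<phi> \<in> conf (disj_union L0 L1) \<longleftrightarrow> vleft \<phi> \<in> conf L0 \<and> vright \<phi> \<in> conf L1"
  using conf_disj_union_vjoin[of "vleft \<phi>" "vright \<phi>" L0 L1] by simp

lemma vjoin_eq_iff [simp]: "vjoin a b = vjoin c d \<longleftrightarrow> a = c \<and> b = d"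
  by (metis vleft_vjoin vright_vjoin)

lemma quasifunctional_disj_union:
  assumes "quasifunctional L0 ws0 vs0 f0" "quasifunctional L1 ws1 vs1 f1"
  shows "quasifunctional (disj_union L0 L1)
           (case_sum (Inl \<circ> ws0) (Inr \<circ> ws1)) (case_sum (Inl \<circ> vs0) (Inr \<circ> vs1))
           (\<lambda>x. vjoin (f0 (vleft x)) (f1 (vright x)))"
  unfolding quasifunctional_def
proof (intro conjI ballI)
  show "range (case_sum (Inl \<circ> ws0) (Inr \<circ> ws1)) \<subseteq> verts (disj_union L0 L1)"
    "range (case_sum (Inl \<circ> vs0) (Inr \<circ> vs1)) \<subseteq> verts (disj_union L0 L1)"
    using assms by (auto simp: quasifunctional_def disj_union_def image_subset_iff split: sum.split)
  fix \<phi> assume "\<phi> \<in> conf (disj_union L0 L1)"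
  with assms show "evmap (case_sum (Inl \<circ> vs0) (Inr \<circ> vs1)) \<phi> =
      vjoin (f0 (vleft (evmap (case_sum (Inl \<circ> ws0) (Inr \<circ> ws1)) \<phi>)))
        (f1 (vright (evmap (case_sum (Inl \<circ> ws0) (Inr \<circ> ws1)) \<phi>)))"
    by (simp add: quasifunctional_def conf_disj_union evmap_case_sum)
qed

lemma evmap_disj_union_image:
  assumes "U0 \<subseteq> evmap ws0 ` conf L0" "U1 \<subseteq> evmap ws1 ` conf L1"
  shows "(\<lambda>(a, b). vjoin a b) ` (U0 \<times> U1) \<subseteq> evmap (case_sum (Inl \<circ> ws0) (Inr \<circ> ws1)) ` conf (disj_union L0 L1)"
proof clarify
  fix a b assume "a \<in> U0" "b \<in> U1"
  then obtain \<phi>0 \<phi>1 where "\<phi>0 \<in> conf L0" "a = evmap ws0 \<phi>0" "\<phi>1 \<in> conf L1" "b = evmap ws1 \<phi>1"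
    using assms by blast
  then show "vjoin a b \<in> evmap (case_sum (Inl \<circ> ws0) (Inr \<circ> ws1)) ` conf (disj_union L0 L1)"
    by (intro image_eqI[of _ _ "vjoin \<phi>0 \<phi>1"]) (simp_all add: evmap_case_sum conf_disj_union_vjoin)
qed

lemma linear_decomposition_disj_union:
  "linear_decomposition (evmap (case_sum (Inl \<circ> ws0) (Inr \<circ> ws1)) :: (real^'n)^('v::finite + 'w::finite) \<Rightarrow> _)
     vleft vright (\<lambda>a. vjoin a 0) (\<lambda>b. vjoin 0 b) vleft vright"
  by (intro linear_decomposition.intro linear_evmap linear_vleft linear_vright linear_vjoin_left
      linear_vjoin_right coordinate_selection_vleft coordinate_selection_vright)

lemma strongly_functional_rd_disj_union:
  assumes "strongly_functional_rd L0 ws0 vs0 f0 U0" "strongly_functional_rd L1 ws1 vs1 f1 U1"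
  shows "strongly_functional_rd (disj_union L0 L1)
           (case_sum (Inl \<circ> ws0) (Inr \<circ> ws1)) (case_sum (Inl \<circ> vs0) (Inr \<circ> vs1))
           (\<lambda>x. vjoin (f0 (vleft x)) (f1 (vright x))) ((\<lambda>(a, b). vjoin a b) ` (U0 \<times> U1))"
proof -
  interpret linear_decomposition "evmap (case_sum (Inl \<circ> ws0) (Inr \<circ> ws1))"
    vleft vright "\<lambda>a. vjoin a 0" "\<lambda>b. vjoin 0 b" vleft vright
    by (rule linear_decomposition_disj_union)
  have "analytic_iso (conf (disj_union L0 L1))
      (evmap (case_sum (Inl \<circ> ws0) (Inr \<circ> ws1)) ` conf (disj_union L0 L1))
      (evmap (case_sum (Inl \<circ> ws0) (Inr \<circ> ws1)))"
    using assms unfolding strongly_functional_rd_def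
    by (intro analytic_iso_evaluation) (auto simp: conf_disj_union vjoin_add_zero evmap_case_sum)
  with assms show ?thesis
    unfolding strongly_functional_rd_def
    by (simp add: quasifunctional_disj_union evmap_disj_union_image)
qed

lemma functional_rd_disj_union:
  assumes "functional_rd L0 ws0 vs0 f0 U0" "functional_rd L1 ws1 vs1 f1 U1"
  shows "functional_rd (disj_union L0 L1)
           (case_sum (Inl \<circ> ws0) (Inr \<circ> ws1)) (case_sum (Inl \<circ> vs0) (Inr \<circ> vs1))
           (\<lambda>x. vjoin (f0 (vleft x)) (f1 (vright x))) ((\<lambda>(a, b). vjoin a b) ` (U0 \<times> U1))"
proof -
  let ?ws = "case_sum (Inl \<circ> ws0) (Inr \<circ> ws1)" and ?U = "(\<lambda>(a, b). vjoin a b) ` (U0 \<times> U1)"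
  interpret linear_decomposition "evmap ?ws" vleft vright "\<lambda>a. vjoin a 0" "\<lambda>b. vjoin 0 b" vleft vright
    by (rule linear_decomposition_disj_union)
  obtain E0 E1 :: "real set" and \<sigma>0 \<sigma>1 where
    "analytic_trivialisation (evmap ws0) U0 E0 {\<phi>\<in>conf L0. evmap ws0 \<phi> \<in> U0} \<sigma>0"
    "analytic_trivialisation (evmap ws1) U1 E1 {\<phi>\<in>conf L1. evmap ws1 \<phi> \<in> U1} \<sigma>1"
    using assms unfolding functional_rd_iff by blast
  then have "analytic_trivialisation (evmap ?ws) ?U (E0 \<times> E1) {\<phi>\<in>conf (disj_union L0 L1). evmap ?ws \<phi> \<in> ?U}
      (\<lambda>z. vjoin (\<sigma>0 (vleft (fst z), fst (snd z))) 0 + vjoin 0 (\<sigma>1 (vright (fst z), snd (snd z))))"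
    by (rule analytic_trivialisation_combine[rotated 3])
      (auto simp: conf_disj_union conf_disj_union_vjoin vjoin_add_zero evmap_case_sum)
  then obtain E :: "real set" and \<sigma> where
    "analytic_trivialisation (evmap ?ws) ?U E {\<phi>\<in>conf (disj_union L0 L1). evmap ?ws \<phi> \<in> ?U} \<sigma>"
    by (rule analytic_trivialisation_real_fibre)
  with assms show ?thesis
    unfolding functional_rd_iff by (auto simp: quasifunctional_disj_union evmap_disj_union_image)
qed

section \<open>Identification of input vertices\<close>

definition pull_config :: "('a::finite \<Rightarrow> 'c::finite) \<Rightarrow> 'a set \<Rightarrow> ('p::zero)^'c \<Rightarrow> 'p^'a" where
  "pull_config \<pi> V \<phi> = (\<chi> x. if x \<in> V then \<phi> $ \<pi> x else 0)"

(* Reads the value at an arbitrary representative of each fibre of \<pi>, so it inverts pull_config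
   only on configurations that are constant on the fibres. *)
definition push_config :: "('a::finite \<Rightarrow> 'c::finite) \<Rightarrow> 'a set \<Rightarrow> ('p::zero)^'a \<Rightarrow> 'p^'c" where
  "push_config \<pi> V z = (\<chi> c. if c \<in> \<pi> ` V then z $ (SOME x. x \<in> V \<and> \<pi> x = c) else 0)"

lemma linear_pull_config: "linear (pull_config \<pi> V :: ('p::real_vector)^'c::finite \<Rightarrow> 'p^'a::finite)"
  by (auto intro!: linearI simp: vec_eq_iff pull_config_def)

lemma linear_push_config: "linear (push_config \<pi> V :: ('p::real_vector)^'a::finite \<Rightarrow> 'p^'c::finite)"
  by (auto intro!: linearI simp: vec_eq_iff push_config_def)

lemma pull_config_nth: "x \<in> V \<Longrightarrow> pull_config \<pi> V \<phi> $ x = \<phi> $ \<pi> x"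
  by (simp add: pull_config_def)

lemma push_config_nth:
  assumes "\<And>x y. x \<in> V \<Longrightarrow> y \<in> V \<Longrightarrow> \<pi> x = \<pi> y \<Longrightarrow> z $ x = z $ y" and "x \<in> V"
  shows "push_config \<pi> V z $ \<pi> x = z $ x"
proof -
  define y where "y = (SOME y. y \<in> V \<and> \<pi> y = \<pi> x)"
  have "y \<in> V \<and> \<pi> y = \<pi> x"
    unfolding y_def by (rule someI[of _ x]) (simp add: assms(2))
  then have "z $ y = z $ x"
    using assms(1)[of y x] assms(2) by blast
  then show ?thesis
    using assms(2) by (simp add: push_config_def flip: y_def)
qed

lemma push_pull_config:
  assumes "\<And>c. c \<notin> \<pi> ` V \<Longrightarrow> \<phi> $ c = 0"
  shows "push_config \<pi> V (pull_config \<pi> V \<phi>) = \<phi>"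
proof -
  have "push_config \<pi> V (pull_config \<pi> V \<phi>) $ c = \<phi> $ c" for c
  proof (cases "c \<in> \<pi> ` V")
    case True
    then have "(SOME x. x \<in> V \<and> \<pi> x = c) \<in> V \<and> \<pi> (SOME x. x \<in> V \<and> \<pi> x = c) = c"
      by (metis (mono_tags, lifting) imageE someI)
    with True show ?thesis by (simp add: push_config_def pull_config_def)
  next
    case False
    with assms show ?thesis by (simp add: push_config_def)
  qed
  then show ?thesis by (simp add: vec_eq_iff)
qed

lemma pull_push_config:
  assumes "\<And>x. x \<notin> V \<Longrightarrow> z $ x = 0" and "\<And>x y. x \<in> V \<Longrightarrow> y \<in> V \<Longrightarrow> \<pi> x = \<pi> y \<Longrightarrow> z $ x = z $ y"
  shows "pull_config \<pi> V (push_config \<pi> V z) = z"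
  by (simp add: vec_eq_iff pull_config_def push_config_nth[OF assms(2)] assms(1))

lemma conf_push_linkage_iff:
  assumes "cabled_linkage L"
  shows "\<phi> \<in> conf (push_linkage \<pi> L) \<longleftrightarrow>
    (\<forall>c. c \<notin> \<pi> ` verts L \<longrightarrow> \<phi> $ c = 0) \<and> pull_config \<pi> (verts L) \<phi> \<in> conf L"
proof -
  let ?V = "verts L" and ?\<psi> = "pull_config \<pi> (verts L) \<phi>"
  have pins: "v \<in> ?V" if "(v, x) \<in> pins L" for v x
    using assms that unfolding cabled_linkage_def by force
  have ends: "fst (ends L e) \<in> ?V" "snd (ends L e) \<in> ?V" if "e \<in> edges L" for e
    using assms that unfolding cabled_linkage_def by auto
  have flex: "flex L \<subseteq> edges L"
    using assms unfolding cabled_linkage_def by auto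
  have "(\<forall>(c, x)\<in>map_prod \<pi> id ` pins L. \<phi> $ c = x) \<longleftrightarrow> (\<forall>(v, x)\<in>pins L. ?\<psi> $ v = x)"
    using pins by (auto simp: pull_config_nth)
  moreover have "dist (?\<psi> $ fst (ends L e)) (?\<psi> $ snd (ends L e)) =
      dist (\<phi> $ \<pi> (fst (ends L e))) (\<phi> $ \<pi> (snd (ends L e)))" if "e \<in> edges L" for e
    using ends[OF that] by (simp add: pull_config_nth)
  moreover have "?\<psi> $ v = 0" if "v \<notin> ?V" for v
    using that by (simp add: pull_config_def)
  ultimately show ?thesis
    using flex unfolding conf_def push_linkage_def by (auto simp: subset_iff)
qed

lemma cabled_linkage_disj_union:
  assumes "cabled_linkage L0" "cabled_linkage L1"
  shows "cabled_linkage (disj_union L0 L1)"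
  using assms unfolding cabled_linkage_def disj_union_def
  by (auto simp: doubleton_eq_iff split: sum.splits)

lemma verts_disj_union: "verts (disj_union L0 L1) = Inl ` verts L0 \<union> Inr ` verts L1"
  by (simp add: disj_union_def)

lemma functional_rd_input_verts: "functional_rd L ws vs f U \<Longrightarrow> range ws \<subseteq> verts L"
  and strongly_functional_rd_input_verts: "strongly_functional_rd L ws vs f U \<Longrightarrow> range ws \<subseteq> verts L"
  by (simp_all add: functional_rd_def strongly_functional_rd_def quasifunctional_def)

context
  fixes L0 :: "('v::finite, 'e0, real^'n) linkage" and L1 :: "('w::finite, 'e1, real^'n) linkage"
    and ws0 :: "'k::finite \<Rightarrow> 'v" and ws1 :: "'k \<Rightarrow> 'w" and \<pi> :: "'v + 'w \<Rightarrow> 'c::finite"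
  assumes cabled0: "cabled_linkage L0" and cabled1: "cabled_linkage L1"
    and ws0_verts: "range ws0 \<subseteq> verts L0" and ws1_verts: "range ws1 \<subseteq> verts L1"
    and ident: "is_identification \<pi> (verts (disj_union L0 L1)) {(Inl (ws0 j), Inr (ws1 j)) | j. True}"
begin

abbreviation pull where "pull \<equiv> pull_config \<pi> (verts (disj_union L0 L1))"
abbreviation push where "push \<equiv> push_config \<pi> (verts (disj_union L0 L1))"

lemma input_verts_disj_union:
  "Inl (ws0 j) \<in> verts (disj_union L0 L1)" "Inr (ws1 j) \<in> verts (disj_union L0 L1)"
proof -
  have "ws0 j \<in> verts L0" "ws1 j \<in> verts L1"
    using ws0_verts ws1_verts by auto
  then show "Inl (ws0 j) \<in> verts (disj_union L0 L1)" "Inr (ws1 j) \<in> verts (disj_union L0 L1)"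
    by (simp_all add: verts_disj_union)
qed

lemma matching_inputs_iff_constant_on_fibres:
  "evmap ws0 (vleft z) = evmap ws1 (vright z) \<longleftrightarrow>
     (\<forall>x\<in>verts (disj_union L0 L1). \<forall>y\<in>verts (disj_union L0 L1). \<pi> x = \<pi> y \<longrightarrow> z $ x = z $ y)"
proof
  let ?R = "{(Inl (ws0 j), Inr (ws1 j)) | j. True}"
  assume "evmap ws0 (vleft z) = evmap ws1 (vright z)"
  then have step: "z $ Inl (ws0 j) = z $ Inr (ws1 j)" for j
    by (auto simp: vec_eq_iff)
  show "\<forall>x\<in>verts (disj_union L0 L1). \<forall>y\<in>verts (disj_union L0 L1). \<pi> x = \<pi> y \<longrightarrow> z $ x = z $ y"
  proof (intro ballI impI)
    fix x y assume "x \<in> verts (disj_union L0 L1)" "y \<in> verts (disj_union L0 L1)" "\<pi> x = \<pi> y"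
    then have "(x, y) \<in> (?R \<union> ?R\<inverse>)\<^sup>*"
      using ident unfolding is_identification_def by blast
    then show "z $ x = z $ y"
      by (induction rule: rtrancl_induct) (auto simp: step)
  qed
next
  let ?R = "{(Inl (ws0 j), Inr (ws1 j)) | j. True}"
  assume fibres: "\<forall>x\<in>verts (disj_union L0 L1). \<forall>y\<in>verts (disj_union L0 L1). \<pi> x = \<pi> y \<longrightarrow> z $ x = z $ y"
  have "(Inl (ws0 j), Inr (ws1 j)) \<in> (?R \<union> ?R\<inverse>)\<^sup>*" for j
    by (rule r_into_rtrancl) blast
  then have "\<pi> (Inl (ws0 j)) = \<pi> (Inr (ws1 j))" for j
    using ident input_verts_disj_union unfolding is_identification_def by blast
  then show "evmap ws0 (vleft z) = evmap ws1 (vright z)"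
    using fibres input_verts_disj_union by (simp add: vec_eq_iff)
qed

lemma conf_glued_pull:
  assumes "\<phi> \<in> conf (push_linkage \<pi> (disj_union L0 L1))"
  shows "vleft (pull \<phi>) \<in> conf L0" "vright (pull \<phi>) \<in> conf L1"
    "evmap ws0 (vleft (pull \<phi>)) = evmap ws1 (vright (pull \<phi>))" "push (pull \<phi>) = \<phi>"
proof -
  note conf_iff = conf_push_linkage_iff[OF cabled_linkage_disj_union[OF cabled0 cabled1]]
  show "vleft (pull \<phi>) \<in> conf L0" "vright (pull \<phi>) \<in> conf L1" "push (pull \<phi>) = \<phi>"
    using assms push_pull_config unfolding conf_iff conf_disj_union by auto
  show "evmap ws0 (vleft (pull \<phi>)) = evmap ws1 (vright (pull \<phi>))"
    unfolding matching_inputs_iff_constant_on_fibres by (simp add: pull_config_nth)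
qed

lemma conf_glued_push:
  assumes "z \<in> conf (disj_union L0 L1)" "evmap ws0 (vleft z) = evmap ws1 (vright z)"
  shows "push z \<in> conf (push_linkage \<pi> (disj_union L0 L1))" "pull (push z) = z"
proof -
  have "z $ x = 0" if "x \<notin> verts (disj_union L0 L1)" for x
    using assms(1) that unfolding conf_def by blast
  moreover have "z $ x = z $ y"
    if "x \<in> verts (disj_union L0 L1)" "y \<in> verts (disj_union L0 L1)" "\<pi> x = \<pi> y" for x y
    using assms(2) that unfolding matching_inputs_iff_constant_on_fibres by blast
  ultimately show pull_push: "pull (push z) = z"
    by (rule pull_push_config)
  have "push z $ c = 0" if "c \<notin> \<pi> ` verts (disj_union L0 L1)" for c
    using that by (simp add: push_config_def)
  with assms(1) show "push z \<in> conf (push_linkage \<pi> (disj_union L0 L1))"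
    unfolding conf_push_linkage_iff[OF cabled_linkage_disj_union[OF cabled0 cabled1]]
    by (simp add: pull_push)
qed

lemma evmap_glued_inputs: "evmap (\<lambda>j. \<pi> (Inl (ws0 j))) \<phi> = evmap ws0 (vleft (pull \<phi>))"
  by (simp add: vec_eq_iff pull_config_nth input_verts_disj_union)

lemma push_vjoin_add: "push (vjoin a 0) + push (vjoin 0 b) = push (vjoin a b)"
  for a :: "(real^'n)^'v" and b :: "(real^'n)^'w"
  using linear_add[OF linear_push_config, of \<pi> "verts (disj_union L0 L1)" "vjoin a 0" "vjoin 0 b"]
  by (simp add: vjoin_add_zero)

lemma quasifunctional_glued:
  assumes "quasifunctional L0 ws0 vs0 f0" "quasifunctional L1 ws1 vs1 f1"
  shows "quasifunctional (push_linkage \<pi> (disj_union L0 L1))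
           (\<lambda>j. \<pi> (Inl (ws0 j))) (case_sum (\<pi> \<circ> Inl \<circ> vs0) (\<pi> \<circ> Inr \<circ> vs1)) (\<lambda>x. vjoin (f0 x) (f1 x))"
  unfolding quasifunctional_def
proof (intro conjI ballI)
  have vs: "Inl (vs0 i) \<in> verts (disj_union L0 L1)" "Inr (vs1 i') \<in> verts (disj_union L0 L1)" for i i'
  proof -
    have "vs0 i \<in> verts L0" "vs1 i' \<in> verts L1"
      using assms unfolding quasifunctional_def by blast+
    then show "Inl (vs0 i) \<in> verts (disj_union L0 L1)" "Inr (vs1 i') \<in> verts (disj_union L0 L1)"
      by (simp_all add: verts_disj_union)
  qed
  then show "range (\<lambda>j. \<pi> (Inl (ws0 j))) \<subseteq> verts (push_linkage \<pi> (disj_union L0 L1))"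
    "range (case_sum (\<pi> \<circ> Inl \<circ> vs0) (\<pi> \<circ> Inr \<circ> vs1)) \<subseteq> verts (push_linkage \<pi> (disj_union L0 L1))"
    using input_verts_disj_union by (auto simp: push_linkage_def split: sum.split)
  fix \<phi> assume "\<phi> \<in> conf (push_linkage \<pi> (disj_union L0 L1))"
  note pull = conf_glued_pull[OF this]
  have "evmap (case_sum (\<pi> \<circ> Inl \<circ> vs0) (\<pi> \<circ> Inr \<circ> vs1)) \<phi> =
      vjoin (evmap vs0 (vleft (pull \<phi>))) (evmap vs1 (vright (pull \<phi>)))"
    using vs by (simp add: vec_eq_iff vjoin_def pull_config_nth split: sum.split)
  also have "\<dots> = vjoin (f0 (evmap ws0 (vleft (pull \<phi>)))) (f1 (evmap ws1 (vright (pull \<phi>))))"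
    using assms pull(1,2) unfolding quasifunctional_def by simp
  finally show "evmap (case_sum (\<pi> \<circ> Inl \<circ> vs0) (\<pi> \<circ> Inr \<circ> vs1)) \<phi> =
      vjoin (f0 (evmap (\<lambda>j. \<pi> (Inl (ws0 j))) \<phi>)) (f1 (evmap (\<lambda>j. \<pi> (Inl (ws0 j))) \<phi>))"
    using pull(3) by (simp add: evmap_glued_inputs)
qed

lemma evmap_glued_image:
  assumes "U0 \<subseteq> evmap ws0 ` conf L0" "U1 \<subseteq> evmap ws1 ` conf L1"
  shows "U0 \<inter> U1 \<subseteq> evmap (\<lambda>j. \<pi> (Inl (ws0 j))) ` conf (push_linkage \<pi> (disj_union L0 L1))"
proof
  fix u assume "u \<in> U0 \<inter> U1"
  then obtain \<phi>0 \<phi>1 where "\<phi>0 \<in> conf L0" "u = evmap ws0 \<phi>0" "\<phi>1 \<in> conf L1" "u = evmap ws1 \<phi>1"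
    using assms by blast
  then have "vjoin \<phi>0 \<phi>1 \<in> conf (disj_union L0 L1)"
    "evmap ws0 (vleft (vjoin \<phi>0 \<phi>1)) = evmap ws1 (vright (vjoin \<phi>0 \<phi>1))"
    "u = evmap ws0 (vleft (vjoin \<phi>0 \<phi>1))"
    by (simp_all add: conf_disj_union_vjoin)
  then show "u \<in> evmap (\<lambda>j. \<pi> (Inl (ws0 j))) ` conf (push_linkage \<pi> (disj_union L0 L1))"
    using conf_glued_push by (intro image_eqI[of _ _ "push (vjoin \<phi>0 \<phi>1)"]) (simp_all add: evmap_glued_inputs)
qed

lemma linear_decomposition_glued:
  "linear_decomposition (evmap (\<lambda>j. \<pi> (Inl (ws0 j)))) (\<lambda>u. u) (\<lambda>u. u)
     (\<lambda>a. push (vjoin a 0)) (\<lambda>b. push (vjoin 0 b)) (\<lambda>\<phi>. vleft (pull \<phi>)) (\<lambda>\<phi>. vright (pull \<phi>))"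
proof (intro linear_decomposition.intro linear_evmap coordinate_selection_id)
  show "linear (\<lambda>a. push (vjoin a 0))" "linear (\<lambda>b. push (vjoin 0 b))"
    using linear_compose[OF linear_vjoin_left linear_push_config]
      linear_compose[OF linear_vjoin_right linear_push_config] by (simp_all add: o_def)
  show "linear (\<lambda>\<phi>. vleft (pull \<phi>))" "linear (\<lambda>\<phi>. vright (pull \<phi>))"
    using linear_compose[OF linear_pull_config linear_vleft]
      linear_compose[OF linear_pull_config linear_vright] by (simp_all add: o_def)
qed

lemma strongly_functional_rd_glued:
  assumes "strongly_functional_rd L0 ws0 vs0 f0 U0" "strongly_functional_rd L1 ws1 vs1 f1 U1"
  shows "strongly_functional_rd (push_linkage \<pi> (disj_union L0 L1))
           (\<lambda>j. \<pi> (Inl (ws0 j))) (case_sum (\<pi> \<circ> Inl \<circ> vs0) (\<pi> \<circ> Inr \<circ> vs1))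
           (\<lambda>x. vjoin (f0 x) (f1 x)) (U0 \<inter> U1)"
proof -
  interpret linear_decomposition "evmap (\<lambda>j. \<pi> (Inl (ws0 j)))" "\<lambda>u. u" "\<lambda>u. u"
    "\<lambda>a. push (vjoin a 0)" "\<lambda>b. push (vjoin 0 b)" "\<lambda>\<phi>. vleft (pull \<phi>)" "\<lambda>\<phi>. vright (pull \<phi>)"
    by (rule linear_decomposition_glued)
  have "analytic_iso (conf (push_linkage \<pi> (disj_union L0 L1)))
      (evmap (\<lambda>j. \<pi> (Inl (ws0 j))) ` conf (push_linkage \<pi> (disj_union L0 L1)))
      (evmap (\<lambda>j. \<pi> (Inl (ws0 j))))"
    using assms unfolding strongly_functional_rd_def
    by (intro analytic_iso_evaluation)
      (auto simp: conf_glued_pull push_vjoin_add evmap_glued_inputs)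
  with assms show ?thesis
    unfolding strongly_functional_rd_def by (simp add: quasifunctional_glued evmap_glued_image)
qed

lemma functional_rd_glued:
  assumes "functional_rd L0 ws0 vs0 f0 U0" "functional_rd L1 ws1 vs1 f1 U1"
  shows "functional_rd (push_linkage \<pi> (disj_union L0 L1))
           (\<lambda>j. \<pi> (Inl (ws0 j))) (case_sum (\<pi> \<circ> Inl \<circ> vs0) (\<pi> \<circ> Inr \<circ> vs1))
           (\<lambda>x. vjoin (f0 x) (f1 x)) (U0 \<inter> U1)"
proof -
  let ?L = "push_linkage \<pi> (disj_union L0 L1)" and ?ws = "\<lambda>j. \<pi> (Inl (ws0 j))"
  interpret linear_decomposition "evmap ?ws" "\<lambda>u. u" "\<lambda>u. u"
    "\<lambda>a. push (vjoin a 0)" "\<lambda>b. push (vjoin 0 b)" "\<lambda>\<phi>. vleft (pull \<phi>)" "\<lambda>\<phi>. vright (pull \<phi>)"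
    by (rule linear_decomposition_glued)
  obtain E0 E1 :: "real set" and \<sigma>0 \<sigma>1 where
    "analytic_trivialisation (evmap ws0) U0 E0 {\<phi>\<in>conf L0. evmap ws0 \<phi> \<in> U0} \<sigma>0"
    "analytic_trivialisation (evmap ws1) U1 E1 {\<phi>\<in>conf L1. evmap ws1 \<phi> \<in> U1} \<sigma>1"
    using assms unfolding functional_rd_iff by blast
  then have "analytic_trivialisation (evmap ?ws) (U0 \<inter> U1) (E0 \<times> E1) {\<phi>\<in>conf ?L. evmap ?ws \<phi> \<in> U0 \<inter> U1}
      (\<lambda>z. push (vjoin (\<sigma>0 (fst z, fst (snd z))) 0) + push (vjoin 0 (\<sigma>1 (fst z, snd (snd z)))))"
    by (rule analytic_trivialisation_combine[rotated 3])
      (auto simp: conf_glued_pull conf_glued_push conf_disj_union_vjoin push_vjoin_add evmap_glued_inputs)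
  then obtain E :: "real set" and \<sigma> where
    "analytic_trivialisation (evmap ?ws) (U0 \<inter> U1) E {\<phi>\<in>conf ?L. evmap ?ws \<phi> \<in> U0 \<inter> U1} \<sigma>"
    by (rule analytic_trivialisation_real_fibre)
  with assms show ?thesis
    unfolding functional_rd_iff by (auto simp: quasifunctional_glued evmap_glued_image)
qed

end

theorem lemma4p2:
  fixes L0 :: "('v::finite, 'e0, real^'n) linkage"
    and L1 :: "('w::finite, 'e1, real^'n) linkage"
  assumes "cabled_linkage L0" and "cabled_linkage L1"
  shows
   "(\<forall>(ws0 :: 'k0::finite \<Rightarrow> 'v) (vs0 :: 'm0::finite \<Rightarrow> 'v) f0 U0
       (ws1 :: 'k1::finite \<Rightarrow> 'w) (vs1 :: 'm1::finite \<Rightarrow> 'w) f1 U1.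
      (functional_rd L0 ws0 vs0 f0 U0 \<and> functional_rd L1 ws1 vs1 f1 U1 \<longrightarrow>
         functional_rd (disj_union L0 L1)
           (case_sum (Inl \<circ> ws0) (Inr \<circ> ws1)) (case_sum (Inl \<circ> vs0) (Inr \<circ> vs1))
           (\<lambda>x. vjoin (f0 (vleft x)) (f1 (vright x)))
           ((\<lambda>(a, b). vjoin a b) ` (U0 \<times> U1))) \<and>
      (strongly_functional_rd L0 ws0 vs0 f0 U0 \<and> strongly_functional_rd L1 ws1 vs1 f1 U1 \<longrightarrow>
         strongly_functional_rd (disj_union L0 L1)
           (case_sum (Inl \<circ> ws0) (Inr \<circ> ws1)) (case_sum (Inl \<circ> vs0) (Inr \<circ> vs1))
           (\<lambda>x. vjoin (f0 (vleft x)) (f1 (vright x)))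
           ((\<lambda>(a, b). vjoin a b) ` (U0 \<times> U1)))) \<and>
    (\<forall>(ws0 :: 'k::finite \<Rightarrow> 'v) (vs0 :: 'l0::finite \<Rightarrow> 'v) f0 U0
       (ws1 :: 'k \<Rightarrow> 'w) (vs1 :: 'l1::finite \<Rightarrow> 'w) f1 U1 (\<pi> :: 'v + 'w \<Rightarrow> 'c::finite).
      is_identification \<pi> (verts (disj_union L0 L1)) {(Inl (ws0 j), Inr (ws1 j)) | j. True} \<longrightarrow>
      (functional_rd L0 ws0 vs0 f0 U0 \<and> functional_rd L1 ws1 vs1 f1 U1 \<longrightarrow>
         functional_rd (push_linkage \<pi> (disj_union L0 L1))
           (\<lambda>j. \<pi> (Inl (ws0 j))) (case_sum (\<pi> \<circ> Inl \<circ> vs0) (\<pi> \<circ> Inr \<circ> vs1))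
           (\<lambda>x. vjoin (f0 x) (f1 x)) (U0 \<inter> U1)) \<and>
      (strongly_functional_rd L0 ws0 vs0 f0 U0 \<and> strongly_functional_rd L1 ws1 vs1 f1 U1 \<longrightarrow>
         strongly_functional_rd (push_linkage \<pi> (disj_union L0 L1))
           (\<lambda>j. \<pi> (Inl (ws0 j))) (case_sum (\<pi> \<circ> Inl \<circ> vs0) (\<pi> \<circ> Inr \<circ> vs1))
           (\<lambda>x. vjoin (f0 x) (f1 x)) (U0 \<inter> U1)))"
  apply (intro conjI allI impI; elim conjE)
     apply (rule functional_rd_disj_union; assumption)
    apply (rule strongly_functional_rd_disj_union; assumption)
   apply (rule functional_rd_glued[OF assms]; (assumption | erule functional_rd_input_verts))
  apply (rule strongly_functional_rd_glued[OF assms]; (assumption | erule strongly_functional_rd_input_verts))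
  done

end
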